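(* For every $n\ge1$ and every pattern $\sigma\in\mathfrak{S}_3$, the number of $3$-arrangements $\mathfrak{a}$ of $[n]$ whose permutation form $\mathrm{pf}_3(\mathfrak{a})$ avoids $\sigma$ equals $C(n+2)-2^n$, where $C(j)=\frac{1}{j+1}\binom{2j}{j}$ is the $j$-th Catalan number.
   Context: $\mathfrak{S}_n$ is the set of permutations of $[n]=\{1,\dots,n\}$; $\mathrm{FIX}(\pi)=\{i:\pi(i)=i\}$. A $3$-arrangement of $[n]$ is a pair $\mathfrak{a}=(\pi,\phi)$ with $\pi\in\mathfrak{S}_n$ and $\phi:\mathrm{FIX}(\pi)\to\{-1,-2,-3\}$ arbitrary. The permutation form $\mathrm{pf}_3(\mathfrak{a})$ is obtained from $\pi(1)\cdots\pi(n)$ by replacing $\pi(i)$ with $\phi(i)$ for each $i\in\mathrm{FIX}(\pi)$ with $\phi(i)\neq-3$, and then replacing every occurrence of the $j$-th smallest positive letter by $j$, for all $j$. For an integer word $w$, $\mathrm{red}(w)$ replaces every occurrence of the $j$-th smallest letter of $w$ by $j$. A word $w=w_1\cdots w_n$ avoids $\sigma\in\mathfrak{S}_3$ if there are no $i_1<i_2<i_3$ with $\mathrm{red}(w_{i_1}w_{i_2}w_{i_3})=\sigma$. *)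

theory Defs
  imports "HOL-Combinatorics.Permutations"
begin

text \<open>A 3-arrangement of [n] is a pair (pi, phi): pi permutes {1..n}, and
  phi assigns to every fixed point i in {1..n} of pi a value in {-1,-2,-3};
  outside the fixed points phi is normalised to 0 (so each arrangement has a
  unique representative).\<close>
definition arrangements3 :: "nat \<Rightarrow> ((nat \<Rightarrow> nat) \<times> (nat \<Rightarrow> int)) set" where
  "arrangements3 n = {(\<pi>, \<phi>). \<pi> permutes {1..n} \<and>
     (\<forall>i. \<phi> i \<in> (if i \<in> {1..n} \<and> \<pi> i = i then {-1,-2,-3} else {0}))}"

definition pf3_raw :: "(nat \<Rightarrow> nat) \<Rightarrow> (nat \<Rightarrow> int) \<Rightarrow> nat \<Rightarrow> int" where
  "pf3_raw \<pi> \<phi> i = (if \<pi> i = i \<and> \<phi> i \<noteq> -3 then \<phi> i else int (\<pi> i))"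

definition pf3 :: "nat \<Rightarrow> (nat \<Rightarrow> nat) \<Rightarrow> (nat \<Rightarrow> int) \<Rightarrow> int list" where
  "pf3 n \<pi> \<phi> = map (\<lambda>i. let v = pf3_raw \<pi> \<phi> i in
      if v > 0 then int (card {u \<in> pf3_raw \<pi> \<phi> ` {1..n}. 0 < u \<and> u \<le> v}) else v)
    [1..<n+1]"

definition red :: "int list \<Rightarrow> int list" where
  "red w = map (\<lambda>x. int (card {y \<in> set w. y \<le> x})) w"

definition avoids :: "int list \<Rightarrow> (nat \<Rightarrow> nat) \<Rightarrow> bool" where
  "avoids w \<sigma> \<longleftrightarrow> \<not> (\<exists>i1 i2 i3. i1 < i2 \<and> i2 < i3 \<and> i3 < length w \<and>
      red [w ! i1, w ! i2, w ! i3] = [int (\<sigma> 1), int (\<sigma> 2), int (\<sigma> 3)])"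

definition catalan :: "nat \<Rightarrow> nat" where
  "catalan j = (2 * j choose j) div (j + 1)"

end

theory Submission
  imports Defs
begin

text \<open>Permutation forms of 3-arrangements of \<open>[n]\<close> are exactly the words of length \<open>n\<close> over the
  letters \<open>-2, -1, 1, \<dots>, k\<close> in which every positive letter occurs once, so we count such words
  avoiding \<open>\<sigma>\<close>; by reversal only \<open>\<sigma> \<in> {123, 213, 132}\<close> need to be treated. A word with a
  positive letter arises in exactly one way by inserting its largest letter into a shorter word.
  Call the insertion positions that keep \<open>\<sigma>\<close> avoided active and their number the label: for all
  three patterns a word with label \<open>l\<close> has one child of each label \<open>2, \<dots>, l + 1\<close>, while the
  roots of this forest, the \<open>2^m\<close> words over \<open>{-2, -1}\<close>, have explicitly computable labels.
  Solving the resulting recurrence, the number of avoiders of length \<open>n\<close> with label \<open>k\<close> is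
  \<open>ballot (n + 2) k - defect n k\<close>, and summing over \<open>k\<close> gives \<open>C(n + 2) - 2^n\<close>.\<close>

lemma card_fiber_bij:
  "bij_betw f A B \<Longrightarrow> card {a \<in> A. f a = k} = (if k \<in> B then 1 else 0)"
proof -
  assume "bij_betw f A B"
  then have "card {a \<in> A. f a = k} = card {b \<in> B. b = k}"
    by (intro bij_betw_same_card bij_betw_Collect[where P = "\<lambda>a. f a = k" and Q = "\<lambda>b. b = k"]) auto
  also have "{b \<in> B. b = k} = (if k \<in> B then {k} else {})"
    by auto
  finally show ?thesis
    by simp
qed

lemma card_eq_sum_fibers:
  fixes f :: "'a \<Rightarrow> nat"
  assumes "finite A" "\<And>x. x \<in> A \<Longrightarrow> f x \<le> N"
  shows "card {x \<in> A. i \<le> f x} = (\<Sum>j = i..N. card {x \<in> A. f x = j})"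
proof -
  have "{x \<in> A. i \<le> f x} = (\<Union>j\<in>{i..N}. {x \<in> A. f x = j})"
    using assms(2) by auto
  then show ?thesis
    using assms(1) by (simp add: card_UN_disjoint disjoint_iff)
qed

lemma card_Collect_Un_image:
  assumes "inj f" "inj g" "f ` A \<inter> g ` A = {}" "finite A"
  shows "card {v \<in> f ` A \<union> g ` A. P v} = card {u \<in> A. P (f u)} + card {u \<in> A. P (g u)}"
proof -
  have "{v \<in> f ` A \<union> g ` A. P v} = f ` {u \<in> A. P (f u)} \<union> g ` {u \<in> A. P (g u)}"
    by auto
  moreover have "f ` {u \<in> A. P (f u)} \<inter> g ` {u \<in> A. P (g u)} = {}"
    using assms(3) by auto
  ultimately show ?thesis
    using assms by (simp add: card_Un_disjoint card_image inj_on_subset)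
qed

lemma bij_betw_if_inj_card_le:
  assumes "inj_on f A" "f ` A \<subseteq> B" "finite B" "card B \<le> card A"
  shows "bij_betw f A B"
proof -
  have "card (f ` A) = card B"
    using assms card_mono[of B "f ` A"] by (simp add: card_image le_antisym)
  then show ?thesis
    using assms by (simp add: bij_betw_def card_subset_eq)
qed

lemma down_closed_eq_lessThan:
  fixes A :: "nat set"
  assumes "finite A" and down: "\<And>s t. s \<in> A \<Longrightarrow> t \<le> s \<Longrightarrow> t \<in> A"
  shows "A = {..<card A}"
proof (cases "A = {}")
  case False
  have "A = {..Max A}"
    using Max_in[OF assms(1) False] Max_ge[OF assms(1)] by (auto intro: down)
  then show ?thesis
    by (metis card_atMost lessThan_Suc_atMost)
qed simp

lemma bij_betw_card_le_rank:
  fixes T :: "'a :: linorder set"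
  assumes "finite T"
  shows "bij_betw (\<lambda>v. card {t \<in> T. t \<le> v}) T {1..card T}"
proof (rule bij_betw_if_inj_card_le)
  have "card {t \<in> T. t \<le> u} < card {t \<in> T. t \<le> v}" if "u \<in> T" "v \<in> T" "u < v" for u v
  proof (intro psubset_card_mono psubsetI)
    show "{t \<in> T. t \<le> u} \<noteq> {t \<in> T. t \<le> v}"
      using that by (metis (mono_tags, lifting) mem_Collect_eq not_le order_refl)
  qed (use that assms in auto)
  then show "inj_on (\<lambda>v. card {t \<in> T. t \<le> v}) T"
    by (metis (no_types, lifting) inj_on_def linorder_neqE less_irrefl)
  have "1 \<le> card {t \<in> T. t \<le> v} \<and> card {t \<in> T. t \<le> v} \<le> card T" if "v \<in> T" for v
    using that assms card_mono[of T "{t \<in> T. t \<le> v}"] card_gt_0_iff[of "{t \<in> T. t \<le> v}"]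
    by auto
  then show "(\<lambda>v. card {t \<in> T. t \<le> v}) ` T \<subseteq> {1..card T}"
    by auto
qed simp_all

lemma bij_betw_card_ge_rank:
  fixes T :: "'a :: linorder set"
  assumes "finite T"
  shows "bij_betw (\<lambda>v. card {t \<in> T. v \<le> t}) T {1..card T}"
proof (rule bij_betw_if_inj_card_le)
  have "card {t \<in> T. v \<le> t} < card {t \<in> T. u \<le> t}" if "u \<in> T" "v \<in> T" "u < v" for u v
  proof (intro psubset_card_mono psubsetI)
    show "{t \<in> T. v \<le> t} \<noteq> {t \<in> T. u \<le> t}"
      using that by (metis (mono_tags, lifting) mem_Collect_eq not_le order_refl)
  qed (use that assms in auto)
  then show "inj_on (\<lambda>v. card {t \<in> T. v \<le> t}) T"
    by (metis (no_types, lifting) inj_on_def linorder_neqE less_irrefl)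
  have "1 \<le> card {t \<in> T. v \<le> t} \<and> card {t \<in> T. v \<le> t} \<le> card T" if "v \<in> T" for v
    using that assms card_mono[of T "{t \<in> T. v \<le> t}"] card_gt_0_iff[of "{t \<in> T. v \<le> t}"]
    by auto
  then show "(\<lambda>v. card {t \<in> T. v \<le> t}) ` T \<subseteq> {1..card T}"
    by auto
qed simp_all

definition insert_at :: "'a list \<Rightarrow> nat \<Rightarrow> 'a \<Rightarrow> 'a list" where
  "insert_at w s x = take s w @ x # drop s w"

lemma length_insert_at [simp]: "length (insert_at w s x) = Suc (length w)"
  by (simp add: insert_at_def)

lemma insert_at_0 [simp]: "insert_at w 0 x = x # w"
  by (simp add: insert_at_def)

lemma nth_insert_at:
  "s \<le> length w \<Longrightarrow>
     insert_at w s x ! i = (if i < s then w!i else if i = s then x else w!(i-1))"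
  by (auto simp: insert_at_def nth_append min_def nth_Cons')

lemma set_insert_at: "s \<le> length w \<Longrightarrow> set (insert_at w s x) = insert x (set w)"
  by (metis insert_at_def append_take_drop_id set_append set_simps(2) Un_insert_right Un_commute
        Un_insert_left)

lemma mset_insert_at: "mset (insert_at w s x) = add_mset x (mset w)"
  by (metis insert_at_def append_take_drop_id mset_append mset.simps(2) union_mset_add_mset_right)

lemma take_insert_at:
  assumes "s \<le> length w"
  shows "take t (insert_at w s x)
    = (if t \<le> s then take t w else take s w @ x # take (t - Suc s) (drop s w))"
proof (cases "t \<le> s")
  case False
  then obtain d where "t = Suc (s + d)"
    by (metis less_iff_Suc_add not_le)
  then show ?thesis
    using assms by (simp add: insert_at_def)
qed (use assms in \<open>simp add: insert_at_def\<close>)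

lemma drop_insert_at:
  assumes "s \<le> length w" "s < t"
  shows "drop t (insert_at w s x) = drop (t - 1) w"
proof -
  obtain d where "t = Suc (s + d)"
    using assms(2) by (metis less_iff_Suc_add)
  then show ?thesis
    using assms(1) by (simp add: insert_at_def add.commute)
qed

lemma set_take_insert_at:
  assumes "s \<le> length w" "s < t"
  shows "set (take t (insert_at w s x)) = insert x (set (take (t - 1) w))"
proof -
  have "take (t - 1) w = take s w @ take (t - Suc s) (drop s w)"
    using assms take_add[of s "t - Suc s" w] by simp
  then show ?thesis
    using assms by (auto simp: take_insert_at)
qed

lemma insert_at_inj:
  assumes "s \<le> length w" "t \<le> length v" "x \<notin> set w" "x \<notin> set v"
    and eq: "insert_at w s x = insert_at v t x"
  shows "s = t" "w = v"
proof -
  have len: "length w = length v"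
    using arg_cong[OF eq, of length] by simp
  show st: "s = t"
  proof (rule ccontr)
    assume "s \<noteq> t"
    then have "insert_at w s x ! t \<in> set w"
      using assms(1,2) len by (auto simp: nth_insert_at)
    then show False
      using assms(2,3) eq by (simp add: nth_insert_at)
  qed
  have "w = take s (insert_at w s x) @ drop (Suc s) (insert_at w s x)"
    using assms(1) by (simp add: insert_at_def)
  also have "\<dots> = take t (insert_at v t x) @ drop (Suc t) (insert_at v t x)"
    using eq st by simp
  also have "\<dots> = v"
    using assms(2) by (simp add: insert_at_def)
  finally show "w = v" .
qed

lemma ball_take_drop_iff:
  assumes "s \<le> length w"
  shows "(\<forall>x\<in>set (take s w). \<forall>y\<in>set (drop s w). P x y)
    \<longleftrightarrow> (\<forall>i j. i < s \<longrightarrow> s \<le> j \<longrightarrow> j < length w \<longrightarrow> P (w ! i) (w ! j))"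
proof -
  have take_iff: "x \<in> set (take s w) \<longleftrightarrow> (\<exists>i<s. x = w ! i)" for x
    using assms by (auto simp: in_set_conv_nth)
  have drop_iff: "y \<in> set (drop s w) \<longleftrightarrow> (\<exists>j. s \<le> j \<and> j < length w \<and> y = w ! j)" for y
  proof
    assume "y \<in> set (drop s w)"
    then obtain k where "k < length w - s" "y = w ! (s + k)"
      using assms by (auto simp: in_set_conv_nth)
    then show "\<exists>j. s \<le> j \<and> j < length w \<and> y = w ! j"
      by (intro exI[of _ "s + k"]) auto
  next
    assume "\<exists>j. s \<le> j \<and> j < length w \<and> y = w ! j"
    then obtain j where "s \<le> j" "j < length w" "y = w ! j"
      by blast
    then show "y \<in> set (drop s w)"
      using assms by (auto simp: in_set_conv_nth intro!: exI[of _ "j - s"])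
  qed
  show ?thesis
    by (simp only: Ball_def take_iff drop_iff) blast
qed

lemma sorted_wrt_const: "set xs \<subseteq> {c} \<Longrightarrow> R c c \<Longrightarrow> sorted_wrt R xs"
  by (induction xs) auto

lemma Collect_sorted_wrt_take_Cons:
  "{t. t \<le> Suc (length u) \<and> sorted_wrt R (take t (x # u))}
     = insert 0 (Suc ` {t. t \<le> length u \<and> (\<forall>y\<in>set (take t u). R x y) \<and> sorted_wrt R (take t u)})"
proof (intro set_eqI)
  fix t
  show "t \<in> {t. t \<le> Suc (length u) \<and> sorted_wrt R (take t (x # u))} \<longleftrightarrow>
    t \<in> insert 0 (Suc ` {t. t \<le> length u \<and> (\<forall>y\<in>set (take t u). R x y) \<and> sorted_wrt R (take t u)})"
    by (cases t) auto
qed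

definition lead_run :: "'a \<Rightarrow> 'a list \<Rightarrow> nat" where
  "lead_run c u = length (takeWhile (\<lambda>x. x = c) u)"

lemma lead_run_le: "lead_run c u \<le> length u"
  by (simp add: lead_run_def length_takeWhile_le)

lemma set_take_subset_iff_lead_run:
  assumes "t \<le> length u"
  shows "set (take t u) \<subseteq> {c} \<longleftrightarrow> t \<le> lead_run c u"
proof
  assume "set (take t u) \<subseteq> {c}"
  then have "u ! i = c" if "i < t" for i
    using that assms nth_mem[of i "take t u"] by auto
  then show "t \<le> lead_run c u"
    unfolding lead_run_def using assms by (rule length_takeWhile_less_P_nth)
next
  assume t: "t \<le> lead_run c u"
  show "set (take t u) \<subseteq> {c}"
  proof
    fix x assume "x \<in> set (take t u)"
    then obtain i where i: "i < t" "x = u ! i"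
      using assms by (auto simp: in_set_conv_nth)
    then have "x \<in> set (takeWhile (\<lambda>x. x = c) u)"
      using t takeWhile_nth[of i "\<lambda>x. x = c" u] nth_mem[of i "takeWhile (\<lambda>x. x = c) u"]
      by (simp add: lead_run_def)
    then show "x \<in> {c}"
      by (auto dest: set_takeWhileD)
  qed
qed

definition avoids3 :: "('a \<Rightarrow> 'a \<Rightarrow> 'a \<Rightarrow> bool) \<Rightarrow> 'a list \<Rightarrow> bool" where
  "avoids3 Q w \<longleftrightarrow> \<not> (\<exists>i j k. i < j \<and> j < k \<and> k < length w \<and> Q (w!i) (w!j) (w!k))"

lemma avoids3_insert_atD:
  assumes s: "s \<le> length w" and av: "avoids3 Q (insert_at w s x)"
  shows "avoids3 Q w"
    and "\<not> (\<exists>i j. i < j \<and> j < s \<and> Q (w!i) (w!j) x)"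
    and "\<not> (\<exists>i j. i < s \<and> s \<le> j \<and> j < length w \<and> Q (w!i) x (w!j))"
    and "\<not> (\<exists>i j. s \<le> i \<and> i < j \<and> j < length w \<and> Q x (w!i) (w!j))"
proof -
  define v where "v = insert_at w s x"
  define up where "up i = (if i < s then i else Suc i)" for i
  have v_up: "v ! up i = w ! i" for i
    using s by (simp add: v_def up_def nth_insert_at)
  have v_s: "v ! s = x" "s < length v"
    using s by (simp_all add: v_def nth_insert_at)
  have up_less: "up i < up j \<longleftrightarrow> i < j" "up i < length v \<longleftrightarrow> i < length w" for i j
    using s by (auto simp: up_def v_def)
  have up_s: "s < up i \<longleftrightarrow> s \<le> i" "up i < s \<longleftrightarrow> i < s" for i
    by (auto simp: up_def)
  have no_triple: "\<not> (i < j \<and> j < k \<and> k < length v \<and> Q (v!i) (v!j) (v!k))" for i j k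
    using av by (auto simp: avoids3_def v_def)
  show "avoids3 Q w"
    unfolding avoids3_def
  proof clarify
    fix i j k assume "i < j" "j < k" "k < length w" "Q (w!i) (w!j) (w!k)"
    then show False
      using no_triple[of "up i" "up j" "up k"] by (simp add: up_less v_up)
  qed
  show "\<not> (\<exists>i j. i < j \<and> j < s \<and> Q (w!i) (w!j) x)"
  proof clarify
    fix i j assume "i < j" "j < s" "Q (w!i) (w!j) x"
    then show False
      using no_triple[of "up i" "up j" s] v_s by (simp add: up_less up_s v_up)
  qed
  show "\<not> (\<exists>i j. i < s \<and> s \<le> j \<and> j < length w \<and> Q (w!i) x (w!j))"
  proof clarify
    fix i j assume "i < s" "s \<le> j" "j < length w" "Q (w!i) x (w!j)"
    then show False
      using no_triple[of "up i" s "up j"] v_s by (simp add: up_less up_s v_up)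
  qed
  show "\<not> (\<exists>i j. s \<le> i \<and> i < j \<and> j < length w \<and> Q x (w!i) (w!j))"
  proof clarify
    fix i j assume "s \<le> i" "i < j" "j < length w" "Q x (w!i) (w!j)"
    then show False
      using no_triple[of s "up i" "up j"] v_s by (simp add: up_less up_s v_up)
  qed
qed

lemma avoids3_insert_atI:
  assumes s: "s \<le> length w" and "avoids3 Q w"
    and "\<not> (\<exists>i j. i < j \<and> j < s \<and> Q (w!i) (w!j) x)"
    and "\<not> (\<exists>i j. i < s \<and> s \<le> j \<and> j < length w \<and> Q (w!i) x (w!j))"
    and "\<not> (\<exists>i j. s \<le> i \<and> i < j \<and> j < length w \<and> Q x (w!i) (w!j))"
  shows "avoids3 Q (insert_at w s x)"
  unfolding avoids3_def
proof clarify
  define v where "v = insert_at w s x"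
  define down where "down i = (if i < s then i else i - 1)" for i
  have v_s: "v ! s = x"
    using s by (simp add: v_def nth_insert_at)
  have v_down: "v ! i = w ! down i" "down i < length w" if "i \<noteq> s" "i < length v" for i
    using s that by (auto simp: v_def down_def nth_insert_at)
  fix i j k
  assume ijk: "i < j" "j < k" "k < length (insert_at w s x)"
    "Q (insert_at w s x ! i) (insert_at w s x ! j) (insert_at w s x ! k)"
  then have ijk: "i < j" "j < k" "k < length v" "Q (v!i) (v!j) (v!k)"
    by (simp_all add: v_def)
  consider "i = s" | "j = s" | "k = s" | "s \<notin> {i, j, k}"
    by blast
  then show False
  proof cases
    case 1
    then have "s \<le> down j" "down j < down k" "down k < length w" "Q x (w ! down j) (w ! down k)"
      using ijk v_s v_down[of j] v_down[of k] by (auto simp: down_def)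
    then show False
      using assms(5) by blast
  next
    case 2
    then have "down i < s" "s \<le> down k" "down k < length w" "Q (w ! down i) x (w ! down k)"
      using ijk v_s v_down[of i] v_down[of k] by (auto simp: down_def)
    then show False
      using assms(4) by blast
  next
    case 3
    then have "down i < down j" "down j < s" "Q (w ! down i) (w ! down j) x"
      using ijk v_s v_down[of i] v_down[of j] by (auto simp: down_def)
    then show False
      using assms(3) by blast
  next
    case 4
    then have "down i < down j" "down j < down k" "down k < length w"
        "Q (w ! down i) (w ! down j) (w ! down k)"
      using ijk v_down[of i] v_down[of j] v_down[of k] by (auto simp: down_def)
    then show False
      using assms(2) by (auto simp: avoids3_def)
  qed
qed

lemma avoids3_insert_at_iff:
  assumes "s \<le> length w"
  shows "avoids3 Q (insert_at w s x) \<longleftrightarrow> avoids3 Q w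
     \<and> \<not> (\<exists>i j. i < j \<and> j < s \<and> Q (w!i) (w!j) x)
     \<and> \<not> (\<exists>i j. i < s \<and> s \<le> j \<and> j < length w \<and> Q (w!i) x (w!j))
     \<and> \<not> (\<exists>i j. s \<le> i \<and> i < j \<and> j < length w \<and> Q x (w!i) (w!j))"
proof
  assume "avoids3 Q (insert_at w s x)"
  from avoids3_insert_atD[OF assms this] show "avoids3 Q w
     \<and> \<not> (\<exists>i j. i < j \<and> j < s \<and> Q (w!i) (w!j) x)
     \<and> \<not> (\<exists>i j. i < s \<and> s \<le> j \<and> j < length w \<and> Q (w!i) x (w!j))
     \<and> \<not> (\<exists>i j. s \<le> i \<and> i < j \<and> j < length w \<and> Q x (w!i) (w!j))"
    by (intro conjI)
qed (elim conjE, rule avoids3_insert_atI[OF assms])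

lemma avoids3_rev: "avoids3 Q (rev w) \<longleftrightarrow> avoids3 (\<lambda>x y z. Q z y x) w"
proof -
  have "avoids3 Q (rev w)" if "avoids3 (\<lambda>x y z. Q z y x) w" for Q w
    unfolding avoids3_def
  proof clarify
    fix i j k
    assume ijk: "i < j" "j < k" "k < length (rev w)" "Q (rev w ! i) (rev w ! j) (rev w ! k)"
    let ?r = "\<lambda>i. length w - Suc i"
    have "?r k < ?r j" "?r j < ?r i" "?r i < length w" "Q (w ! ?r i) (w ! ?r j) (w ! ?r k)"
      using ijk by (auto simp: rev_nth)
    then show False
      using that by (auto simp: avoids3_def)
  qed
  from this[of "\<lambda>x y z. Q z y x" "rev w"] this[of Q w] show ?thesis
    by auto
qed

section \<open>Arrangement words and their generating tree\<close>

definition pos_mset :: "int list \<Rightarrow> int multiset" where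
  "pos_mset w = {#x \<in># mset w. 0 < x#}"

definition next_letter :: "int list \<Rightarrow> int" where
  "next_letter w = int (size (pos_mset w)) + 1"

text \<open>The permutation forms: \<open>-1\<close> and \<open>-2\<close> mark decorated fixed points, and the positive
  letters form a permutation of \<open>1, \<dots>, k\<close>.\<close>

definition arrangement_word :: "int list \<Rightarrow> bool" where
  "arrangement_word w \<longleftrightarrow>
     set w \<subseteq> {-2, -1} \<union> {0<..} \<and> pos_mset w = mset_set {1..next_letter w - 1}"

abbreviation insert_max :: "int list \<Rightarrow> nat \<Rightarrow> int list" where
  "insert_max w s \<equiv> insert_at w s (next_letter w)"

lemma pos_mset_insert_at:
  "pos_mset (insert_at w s x) = (if 0 < x then add_mset x (pos_mset w) else pos_mset w)"
  by (simp add: pos_mset_def mset_insert_at)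

lemma set_pos_mset: "set_mset (pos_mset w) = {x \<in> set w. 0 < x}"
  by (auto simp: pos_mset_def)

lemma next_letter_pos: "0 < next_letter w"
  by (simp add: next_letter_def)

lemma next_letter_gt:
  assumes "arrangement_word w" "x \<in> set w"
  shows "x < next_letter w"
proof (cases "0 < x")
  case True
  then have "x \<in># pos_mset w"
    using assms(2) by (simp add: pos_mset_def)
  then show ?thesis
    using assms(1) by (simp add: arrangement_word_def)
qed (simp add: next_letter_def)

lemma next_letter_notin: "arrangement_word w \<Longrightarrow> next_letter w \<notin> set w"
  using next_letter_gt by blast

lemma arrangement_word_nth_inj:
  assumes w: "arrangement_word w" and ij: "i < length w" "j < length w" "w ! i = w ! j" "0 < w ! i"
  shows "i = j"
proof (rule ccontr)
  assume "i \<noteq> j"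
  have "count (pos_mset w) (w ! i) = card {k. k < length w \<and> w ! k = w ! i}"
    using ij(4)
    by (simp add: pos_mset_def count_mset count_list_eq_length_filter length_filter_conv_card
        eq_commute)
  also have "\<dots> \<ge> card {i, j}"
    using ij by (intro card_mono) auto
  finally have "count (pos_mset w) (w ! i) \<ge> 2"
    using \<open>i \<noteq> j\<close> by simp
  then show False
    using w by (simp add: arrangement_word_def count_mset_set' split: if_splits)
qed

lemma arrangement_word_insert_max:
  assumes w: "arrangement_word w" and s: "s \<le> length w"
  shows "arrangement_word (insert_max w s)" "next_letter (insert_max w s) = next_letter w + 1"
proof -
  have pos: "pos_mset (insert_max w s) = add_mset (next_letter w) (pos_mset w)"
    by (simp add: pos_mset_insert_at next_letter_pos)
  then show next_eq: "next_letter (insert_max w s) = next_letter w + 1"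
    by (simp add: next_letter_def)
  have "{1..next_letter w} = insert (next_letter w) {1..next_letter w - 1}"
    using next_letter_pos[of w] by auto
  then have "pos_mset (insert_max w s) = mset_set {1..next_letter w}"
    using w pos by (simp add: arrangement_word_def)
  moreover have "set (insert_max w s) \<subseteq> {-2, -1} \<union> {0<..}"
    using w s next_letter_pos[of w] by (auto simp: arrangement_word_def set_insert_at)
  ultimately show "arrangement_word (insert_max w s)"
    by (simp add: arrangement_word_def next_eq)
qed

lemma arrangement_word_rev: "arrangement_word (rev w) \<longleftrightarrow> arrangement_word w"
  by (simp add: arrangement_word_def pos_mset_def next_letter_def)

definition avoiders :: "(int \<Rightarrow> int \<Rightarrow> int \<Rightarrow> bool) \<Rightarrow> nat \<Rightarrow> int list set" where
  "avoiders Q n = {w. length w = n \<and> arrangement_word w \<and> avoids3 Q w}"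

definition active_sites :: "(int \<Rightarrow> int \<Rightarrow> int \<Rightarrow> bool) \<Rightarrow> int list \<Rightarrow> nat set" where
  "active_sites Q w = {s. s \<le> length w \<and> avoids3 Q (insert_max w s)}"

definition label :: "(int \<Rightarrow> int \<Rightarrow> int \<Rightarrow> bool) \<Rightarrow> int list \<Rightarrow> nat" where
  "label Q w = card (active_sites Q w)"

lemma finite_active_sites [simp]: "finite (active_sites Q w)"
  by (rule finite_subset[of _ "{..length w}"]) (auto simp: active_sites_def)

lemma label_le:
  assumes "w \<in> avoiders Q n"
  shows "label Q w \<le> Suc n"
proof -
  have "label Q w \<le> card {..length w}"
    unfolding label_def by (rule card_mono) (auto simp: active_sites_def)
  then show ?thesis
    using assms by (simp add: avoiders_def)
qed

lemma finite_avoiders: "finite (avoiders Q n)"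
proof (rule finite_subset)
  show "avoiders Q n \<subseteq> {w. set w \<subseteq> {-2..int n} \<and> length w = n}"
  proof safe
    fix w x assume w: "w \<in> avoiders Q n" and x: "x \<in> set w"
    have "size (pos_mset w) \<le> n"
      using w size_filter_mset_lesseq[of _ "mset w"] by (simp add: avoiders_def pos_mset_def)
    then show "x \<in> {-2..int n}"
      using w x next_letter_gt[of w x]
      by (auto simp: avoiders_def arrangement_word_def next_letter_def)
  qed (simp add: avoiders_def)
qed (simp add: finite_lists_length_eq)

lemma avoiders_0: "avoiders Q 0 = {[]}"
  by (auto simp: avoiders_def arrangement_word_def avoids3_def pos_mset_def next_letter_def)

lemma label_Nil: "label Q [] = 1"
proof -
  have "active_sites Q [] = {0}"
    by (auto simp: active_sites_def avoids3_def)
  then show ?thesis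
    by (simp add: label_def)
qed

lemma insert_max_in_avoiders:
  "w \<in> avoiders Q n \<Longrightarrow> s \<in> active_sites Q w \<Longrightarrow> insert_max w s \<in> avoiders Q (Suc n)"
  by (simp add: avoiders_def active_sites_def arrangement_word_insert_max)

lemma remove_max_letter:
  assumes "w' \<in> avoiders Q (Suc n)" "pos_mset w' \<noteq> {#}"
  obtains w s where "w \<in> avoiders Q n" "s \<in> active_sites Q w" "w' = insert_max w s"
proof -
  have w': "arrangement_word w'" "length w' = Suc n" "avoids3 Q w'"
    using assms(1) by (auto simp: avoiders_def)
  define c where "c = next_letter w' - 1"
  have pos': "pos_mset w' = mset_set {1..c}"
    using w' by (simp add: arrangement_word_def c_def)
  then have "c \<in># pos_mset w'" "0 < c"
    using assms(2) by (cases "1 \<le> c"; auto)+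
  then obtain p where p: "p < length w'" "w' ! p = c"
    by (auto simp: pos_mset_def in_set_conv_nth)
  define w where "w = take p w' @ drop (Suc p) w'"
  have p_le: "p \<le> length w"
    using p by (simp add: w_def)
  have ins: "insert_at w p c = w'"
    using p id_take_nth_drop[OF p(1)] by (simp add: insert_at_def w_def min_def)
  have "{1..c} = insert c {1..c - 1}"
    using \<open>0 < c\<close> by auto
  then have "add_mset c (pos_mset w) = add_mset c (mset_set {1..c - 1})"
    using pos' arg_cong[OF ins, of pos_mset] \<open>0 < c\<close> by (simp add: pos_mset_insert_at)
  then have pos: "pos_mset w = mset_set {1..c - 1}"
    by simp
  then have next_w: "next_letter w = c"
    using \<open>0 < c\<close> by (simp add: next_letter_def)
  have "set w \<subseteq> set w'"
    using ins set_insert_at[OF p_le, of c] by auto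
  then have "arrangement_word w"
    using w' pos next_w by (auto simp: arrangement_word_def)
  moreover have "avoids3 Q w"
    using w' avoids3_insert_at_iff[OF p_le, of Q c] ins by simp
  moreover have "length w = n"
    using p w' by (simp add: w_def)
  ultimately have "w \<in> avoiders Q n"
    by (simp add: avoiders_def)
  moreover have "p \<in> active_sites Q w"
    using p_le ins next_w w' by (simp add: active_sites_def)
  ultimately show ?thesis
    using that ins next_w by blast
qed

lemma insert_max_bij:
  "bij_betw (\<lambda>(w, s). insert_max w s) (SIGMA w:avoiders Q n. active_sites Q w)
     {w' \<in> avoiders Q (Suc n). pos_mset w' \<noteq> {#}}"
proof (rule bij_betwI')
  fix ws vt
  assume "ws \<in> (SIGMA w:avoiders Q n. active_sites Q w)"
    and "vt \<in> (SIGMA w:avoiders Q n. active_sites Q w)"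
  moreover obtain w s v t where [simp]: "ws = (w, s)" "vt = (v, t)"
    by fastforce
  ultimately have w: "arrangement_word w" "s \<le> length w" and v: "arrangement_word v" "t \<le> length v"
    by (auto simp: avoiders_def active_sites_def)
  show "((\<lambda>(w, s). insert_max w s) ws = (\<lambda>(w, s). insert_max w s) vt) = (ws = vt)"
  proof
    assume eq: "(\<lambda>(w, s). insert_max w s) ws = (\<lambda>(w, s). insert_max w s) vt"
    then have "next_letter w = next_letter v"
      using arg_cong[OF eq, of next_letter] arrangement_word_insert_max(2)[OF w]
        arrangement_word_insert_max(2)[OF v]
      by simp
    then show "ws = vt"
      using insert_at_inj[OF w(2) v(2) next_letter_notin[OF w(1)]] next_letter_notin[OF v(1)] eq
      by simp
  qed simp
next
  fix ws assume "ws \<in> (SIGMA w:avoiders Q n. active_sites Q w)"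
  then show "(\<lambda>(w, s). insert_max w s) ws \<in> {w' \<in> avoiders Q (Suc n). pos_mset w' \<noteq> {#}}"
    by (auto simp: insert_max_in_avoiders pos_mset_insert_at next_letter_pos)
next
  fix w' assume "w' \<in> {w' \<in> avoiders Q (Suc n). pos_mset w' \<noteq> {#}}"
  then show "\<exists>ws\<in>(SIGMA w:avoiders Q n. active_sites Q w). w' = (\<lambda>(w, s). insert_max w s) ws"
    by (auto elim!: remove_max_letter)
qed

definition neg_words :: "nat \<Rightarrow> int list set" where
  "neg_words m = {u. length u = m \<and> set u \<subseteq> {-2, -1}}"

lemma neg_words_eq: "neg_words m = {u. set u \<subseteq> {-2, -1} \<and> length u = m}"
  by (auto simp: neg_words_def)

lemma finite_neg_words: "finite (neg_words m)"
  by (simp add: neg_words_eq finite_lists_length_eq)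

lemma card_neg_words: "card (neg_words m) = 2 ^ m"
  by (simp add: neg_words_eq card_lists_length_eq numeral_2_eq_2)

lemma neg_words_0: "neg_words 0 = {[]}"
  by (auto simp: neg_words_def)

lemma neg_words_letters: "u \<in> neg_words m \<Longrightarrow> y \<in> set u \<Longrightarrow> y = -2 \<or> y = -1"
  by (auto simp: neg_words_def)

lemma neg_words_subset_avoiders:
  assumes distinct: "\<And>x y z. Q x y z \<Longrightarrow> x \<noteq> y \<and> y \<noteq> z \<and> x \<noteq> z"
  shows "neg_words m \<subseteq> avoiders Q m"
proof
  fix u assume u: "u \<in> neg_words m"
  have "\<not> Q (u!i) (u!j) (u!k)" if "k < length u" "i < k" "j < k" for i j k
  proof -
    have "\<forall>l < length u. u!l \<in> {-2, -1}"
      using u nth_mem by (fastforce simp: neg_words_def)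
    then have "u!i \<in> {-2, -1}" "u!j \<in> {-2, -1}" "u!k \<in> {-2, -1}"
      using that by simp_all
    then show ?thesis
      using distinct[of "u!i" "u!j" "u!k"] by auto
  qed
  then have "avoids3 Q u"
    by (auto simp: avoids3_def)
  moreover have "pos_mset u = {#}"
    using u by (auto simp: pos_mset_def neg_words_def)
  then have "arrangement_word u"
    using u by (auto simp: neg_words_def arrangement_word_def next_letter_def)
  ultimately show "u \<in> avoiders Q m"
    using u by (simp add: neg_words_def avoiders_def)
qed

lemma avoiders_neg_words:
  assumes "w \<in> avoiders Q m" "pos_mset w = {#}"
  shows "w \<in> neg_words m"
proof -
  have "\<not> 0 < x" if "x \<in> set w" for x
    using assms(2) that by (auto simp: pos_mset_def)
  then show ?thesis
    using assms(1) by (fastforce simp: avoiders_def arrangement_word_def neg_words_def)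
qed

lemma card_label_split:
  assumes distinct: "\<And>x y z. Q x y z \<Longrightarrow> x \<noteq> y \<and> y \<noteq> z \<and> x \<noteq> z"
  shows "card {w \<in> avoiders Q m. label Q w = k} = card {u \<in> neg_words m. label Q u = k}
     + card {w \<in> avoiders Q m. pos_mset w \<noteq> {#} \<and> label Q w = k}"
proof -
  have "{w \<in> avoiders Q m. label Q w = k} = {u \<in> neg_words m. label Q u = k}
     \<union> {w \<in> avoiders Q m. pos_mset w \<noteq> {#} \<and> label Q w = k}"
    using neg_words_subset_avoiders[OF distinct, where m = m] avoiders_neg_words by blast
  moreover have "{u \<in> neg_words m. label Q u = k}
      \<inter> {w \<in> avoiders Q m. pos_mset w \<noteq> {#} \<and> label Q w = k} = {}"
    by (auto simp: neg_words_def pos_mset_def)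
  ultimately show ?thesis
    using finite_neg_words finite_avoiders by (simp add: card_Un_disjoint)
qed

lemma card_label_Suc:
  assumes distinct: "\<And>x y z. Q x y z \<Longrightarrow> x \<noteq> y \<and> y \<noteq> z \<and> x \<noteq> z"
    and children: "\<And>w. w \<in> avoiders Q n \<Longrightarrow>
      bij_betw (\<lambda>s. label Q (insert_max w s)) (active_sites Q w) {2..label Q w + 1}"
  shows "card {w \<in> avoiders Q (Suc n). label Q w = k} = card {u \<in> neg_words (Suc n). label Q u = k}
     + card {w \<in> avoiders Q n. 2 \<le> k \<and> k \<le> label Q w + 1}"
proof -
  let ?P = "\<lambda>ws. label Q ((\<lambda>(w, s). insert_max w s) ws) = k"
  have "card {w \<in> avoiders Q (Suc n). pos_mset w \<noteq> {#} \<and> label Q w = k}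
      = card {ws \<in> (SIGMA w:avoiders Q n. active_sites Q w). ?P ws}"
  proof -
    have "bij_betw (\<lambda>(w, s). insert_max w s) {ws \<in> (SIGMA w:avoiders Q n. active_sites Q w). ?P ws}
        {w \<in> {w' \<in> avoiders Q (Suc n). pos_mset w' \<noteq> {#}}. label Q w = k}"
      by (rule bij_betw_Collect[OF insert_max_bij]) simp
    from bij_betw_same_card[OF this] show ?thesis
      by simp
  qed
  also have "{ws \<in> (SIGMA w:avoiders Q n. active_sites Q w). ?P ws}
      = (SIGMA w:avoiders Q n. {s \<in> active_sites Q w. label Q (insert_max w s) = k})"
    by auto
  also have "card \<dots> = (\<Sum>w\<in>avoiders Q n. card {s \<in> active_sites Q w. label Q (insert_max w s) = k})"
    by (simp add: finite_avoiders)
  also have "\<dots> = (\<Sum>w\<in>avoiders Q n. if 2 \<le> k \<and> k \<le> label Q w + 1 then 1 else 0)"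
    using card_fiber_bij[OF children] by (intro sum.cong) auto
  also have "\<dots> = card {w \<in> avoiders Q n. 2 \<le> k \<and> k \<le> label Q w + 1}"
    by (simp add: sum.inter_filter[symmetric] finite_avoiders)
  finally show ?thesis
    using card_label_split[OF distinct, where m = "Suc n" and k = k] by simp
qed

section \<open>Solving the recurrence for the labels\<close>

text \<open>The number of vertices with label \<open>k\<close> on level \<open>m - 1\<close> of the Catalan tree with root
  \<open>(2)\<close> and rule \<open>(k) \<leadsto> (2)(3)\<dots>(k + 1)\<close>.\<close>

definition ballot :: "nat \<Rightarrow> nat \<Rightarrow> int" where
  "ballot m k = (if 2 \<le> k \<and> k \<le> m + 1
     then int ((2 * m - k) choose (m - 1)) - int ((2 * m - k) choose m) else 0)"

lemma ballot_eq_0: "k \<le> 1 \<or> m + 1 < k \<Longrightarrow> ballot m k = 0"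
  by (auto simp: ballot_def)

lemma ballot_Suc:
  assumes m: "1 \<le> m" and k: "2 \<le> k"
  shows "ballot (Suc m) k = ballot m (k - 1) + ballot (Suc m) (Suc k)"
proof -
  obtain j where j: "m = Suc j"
    using m by (cases m) auto
  consider "m + 3 \<le> k" | "k = m + 2" | "k = 2" "m \<noteq> 0" "k \<noteq> m + 2" | "3 \<le> k" "k \<le> m + 1"
    using k m by linarith
  then show ?thesis
  proof cases
    case 2
    then have "2 * Suc m - k = m" "2 * m - (k - 1) = m - 1"
      by auto
    then show ?thesis
      using 2 m by (simp add: ballot_def binomial_eq_0)
  next
    case 3
    have "2 * Suc m - k = Suc (Suc (2 * j))" "2 * Suc m - Suc k = Suc (2 * j)"
      using 3 j by auto
    moreover have "Suc (2 * j) choose j = Suc (2 * j) choose Suc j"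
      using binomial_symmetric[of j "Suc (2 * j)"] by (simp add: Suc_diff_le)
    ultimately show ?thesis
      using 3 j by (simp add: ballot_def)
  next
    case 4
    define N where "N = 2 * m + 1 - k"
    have "2 * Suc m - k = Suc N" "2 * m - (k - 1) = N" "2 * Suc m - Suc k = N"
        "2 \<le> k - 1" "k - 1 \<le> m + 1"
      using 4 by (auto simp: N_def)
    then show ?thesis
      using 4 j by (simp add: ballot_def)
  qed (auto simp: ballot_def)
qed

lemma sum_ballot:
  assumes m: "1 \<le> m" and k: "2 \<le> k"
  shows "(\<Sum>j = k - 1..Suc m. ballot m j) = ballot (Suc m) k"
proof (cases "k \<le> m + 3")
  case True
  then show ?thesis
    using k
  proof (induction k rule: inc_induct)
    case base
    then show ?case
      by (simp add: ballot_eq_0)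
  next
    case (step k)
    have "(\<Sum>j = k - 1..Suc m. ballot m j) = ballot m (k - 1) + (\<Sum>j = Suc k - 1..Suc m. ballot m j)"
      using step.hyps step.prems by (subst sum.atLeast_Suc_atMost) auto
    also have "\<dots> = ballot (Suc m) k"
      using step.IH step.prems ballot_Suc[OF m step.prems] by simp
    finally show ?case .
  qed
qed (simp add: ballot_eq_0)

lemma ballot_2: "ballot (Suc j) 2 = int (catalan j)"
proof -
  let ?C = "2 * j choose j" and ?D = "2 * j choose Suc j"
  have D: "Suc j * ?D = 2 * j * (2 * j - 1 choose j)"
    using binomial_absorption[of j "2 * j"] by simp
  have C: "j * ?C = 2 * j * (2 * j - 1 choose j)"
    using binomial_absorb_comp[of "2 * j" j] by (metis diff_add_inverse2 mult_2)
  have absorb: "Suc j * ?D = j * ?C"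
    unfolding C D ..
  then have "Suc j * ?D \<le> Suc j * ?C"
    by simp
  then have le: "?D \<le> ?C"
    by (simp only: Suc_mult_le_cancel1)
  have "Suc j * (?C - ?D) = ?C"
    using absorb by (simp add: diff_mult_distrib2)
  then have "catalan j = ?C - ?D"
    unfolding catalan_def by (metis Suc_eq_plus1 nonzero_mult_div_cancel_left nat.distinct(1))
  then show ?thesis
    using le by (simp add: ballot_def)
qed

text \<open>The labels of avoiders of length \<open>n\<close> are distributed as \<open>ballot (n + 2) - defect n\<close>:
  \<open>ballot\<close> solves the recurrence of \<open>card_label_Suc\<close> without the roots, and \<open>defect\<close> solves it
  with the roots subtracted (\<open>root_label_count_defect\<close>).\<close>

definition defect :: "nat \<Rightarrow> nat \<Rightarrow> int" where
  "defect n j = (if 2 \<le> j \<and> j \<le> n then int (j - 1) * 2 ^ (n - j) else if j = n + 1 then -1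
     else if j = n + 2 then int (n + 1) else if j = n + 3 then 1 else 0)"

definition defect_tail :: "nat \<Rightarrow> nat \<Rightarrow> int" where
  "defect_tail n i = (if 1 \<le> i \<and> i \<le> n + 1 then int i * 2 ^ (n + 1 - i)
     else if i = n + 2 then int (n + 2) else if i = n + 3 then 1 else 0)"

lemma defect_tail_step:
  assumes "1 \<le> i" "i \<le> n + 3"
  shows "defect n i + defect_tail n (Suc i) = defect_tail n i"
proof -
  consider "i = 1" "1 \<le> n" | "2 \<le> i" "i \<le> n" | "n + 1 \<le> i"
    using assms by linarith
  then show ?thesis
  proof cases
    case 1
    then show ?thesis
      by (cases n) (simp_all add: defect_def defect_tail_def)
  next
    case 2
    then have "n + 1 - i = Suc (n - i)" "n + 1 - Suc i = n - i"
      by auto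
    moreover have "int (i - 1) + int (Suc i) = 2 * int i"
      using 2 by simp
    ultimately show ?thesis
      using 2 by (simp add: defect_def defect_tail_def algebra_simps)
  next
    case 3
    then show ?thesis
      using assms by (auto simp: defect_def defect_tail_def)
  qed
qed

lemma sum_defect:
  assumes "1 \<le> i"
  shows "(\<Sum>j = i..n + 3. defect n j) = defect_tail n i"
proof (cases "i \<le> n + 4")
  case True
  then show ?thesis
    using assms
  proof (induction i rule: inc_induct)
    case (step i)
    have "(\<Sum>j = i..n + 3. defect n j) = defect n i + (\<Sum>j = Suc i..n + 3. defect n j)"
      using step.hyps by (intro sum.atLeast_Suc_atMost) simp
    also have "\<dots> = defect_tail n i"
      using step defect_tail_step[of i n] by simp
    finally show ?case .
  qed (simp add: defect_tail_def)
qed (simp add: defect_tail_def)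

definition lead_run_count :: "nat \<Rightarrow> nat \<Rightarrow> nat" where
  "lead_run_count m i = (if i < m then 2 ^ (m - i - 1) else if i = m then 1 else 0)"

definition root_label_count :: "nat \<Rightarrow> nat \<Rightarrow> nat" where
  "root_label_count m k = (if m = 0 then (if k = 1 then 1 else 0) else if k = m + 1 then m + 1
     else if 2 \<le> k \<and> k \<le> m then (k - 1) * 2 ^ (m - k) else 0)"

lemma root_label_count_Suc:
  "root_label_count (Suc m) k = (if 1 \<le> k then root_label_count m (k - 1) else 0)
     + (if 2 \<le> k then lead_run_count m (k - 2) else 0)"
proof (cases "m = 0")
  case False
  consider "k = m + 2" | "k = m + 1" | "2 \<le> k" "k \<le> m" | "k \<le> 1" | "m + 3 \<le> k"
    by linarith
  then show ?thesis
  proof cases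
    case 2
    then show ?thesis
      using False
      by (cases "m = 1") (auto simp: root_label_count_def lead_run_count_def diff_mult_distrib)
  next
    case 3
    then have "Suc m - k = Suc (m - k)" "m - (k - 2) - 1 = Suc (m - k)" "m - (k - 1) = Suc (m - k)"
      by auto
    then show ?thesis
      using 3 False
      by (cases "k = 2") (auto simp: root_label_count_def lead_run_count_def algebra_simps)
  qed (use False in \<open>auto simp: root_label_count_def lead_run_count_def\<close>)
qed (auto simp: root_label_count_def lead_run_count_def)

lemma root_label_count_defect:
  assumes "2 \<le> k"
  shows "int (root_label_count (Suc n) k) + defect (Suc n) k = defect_tail n (k - 1)"
proof (cases "k \<le> n + 1")
  case True
  then have "Suc n - k = n + 1 - k" "n + 1 - (k - 1) = Suc (n + 1 - k)"
      "1 \<le> k - 1" "k - 1 \<le> n + 1"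
    using assms by auto
  then show ?thesis
    using True assms by (simp add: root_label_count_def defect_def defect_tail_def)
qed (use assms in \<open>auto simp: root_label_count_def defect_def defect_tail_def\<close>)

lemma neg_words_Suc_Cons: "neg_words (Suc m) = Cons (-1) ` neg_words m \<union> Cons (-2) ` neg_words m"
  by (auto simp: neg_words_def length_Suc_conv)

lemma neg_words_Suc_snoc:
  "neg_words (Suc m) = (\<lambda>u. u @ [-2]) ` neg_words m \<union> (\<lambda>u. u @ [-1]) ` neg_words m"
  by (auto simp: neg_words_def length_Suc_conv_rev)

lemma card_neg_words_Suc_Cons:
  "card {v \<in> neg_words (Suc m). P v}
    = card {u \<in> neg_words m. P (-1 # u)} + card {u \<in> neg_words m. P (-2 # u)}"
  unfolding neg_words_Suc_Cons by (rule card_Collect_Un_image) (auto simp: finite_neg_words)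

lemma card_neg_words_Suc_snoc:
  "card {v \<in> neg_words (Suc m). P v}
    = card {u \<in> neg_words m. P (u @ [-2])} + card {u \<in> neg_words m. P (u @ [-1])}"
  unfolding neg_words_Suc_snoc by (rule card_Collect_Un_image) (auto simp: finite_neg_words inj_def)

lemma card_lead_run:
  assumes c: "c \<in> {-2, -1}"
  shows "card {u \<in> neg_words m. lead_run c u = i} = lead_run_count m i"
proof (induction m arbitrary: i)
  case 0
  have "{u \<in> neg_words 0. lead_run c u = i} = (if i = 0 then {[]} else {})"
    by (auto simp: neg_words_0 lead_run_def)
  then show ?case
    by (simp add: lead_run_count_def)
next
  case (Suc m)
  have "card {v \<in> neg_words (Suc m). lead_run c v = i}
      = card {u \<in> neg_words m. Suc (lead_run c u) = i} + card {u \<in> neg_words m. 0 = i}"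
    using c card_neg_words_Suc_Cons[of m "\<lambda>v. lead_run c v = i"]
    by (auto simp: lead_run_def add.commute)
  also have "\<dots> = lead_run_count (Suc m) i"
    using Suc.IH by (cases i) (simp_all add: card_neg_words lead_run_count_def)
  finally show ?case .
qed

lemma card_neg_words_label:
  assumes split: "\<And>m P. card {v \<in> neg_words (Suc m). P v}
      = card {u \<in> neg_words m. P (f u)} + card {u \<in> neg_words m. P (g u)}"
    and f_label: "\<And>m u. u \<in> neg_words m \<Longrightarrow> label Q (f u) = Suc (label Q u)"
    and g_label: "\<And>m u. u \<in> neg_words m \<Longrightarrow> label Q (g u) = Suc (Suc (lead_run c u))"
    and c: "c \<in> {-2, -1}"
  shows "card {u \<in> neg_words m. label Q u = k} = root_label_count m k"
proof (induction m arbitrary: k)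
  case 0
  have "{u \<in> neg_words 0. label Q u = k} = (if k = 1 then {[]} else {})"
    by (auto simp: neg_words_0 label_Nil)
  then show ?case
    by (simp add: root_label_count_def)
next
  case (Suc m)
  have "card {v \<in> neg_words (Suc m). label Q v = k}
      = card {u \<in> neg_words m. Suc (label Q u) = k}
        + card {u \<in> neg_words m. Suc (Suc (lead_run c u)) = k}"
    using split[of m "\<lambda>v. label Q v = k"] f_label[of _ m] g_label[of _ m]
    by (metis (no_types, lifting) Collect_cong)
  also have "card {u \<in> neg_words m. Suc (label Q u) = k}
      = (if 1 \<le> k then root_label_count m (k - 1) else 0)"
    using Suc.IH by (cases k) simp_all
  also have "card {u \<in> neg_words m. Suc (Suc (lead_run c u)) = k}
      = (if 2 \<le> k then lead_run_count m (k - 2) else 0)"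
  proof (cases "2 \<le> k")
    case True
    then have "{u \<in> neg_words m. Suc (Suc (lead_run c u)) = k}
        = {u \<in> neg_words m. lead_run c u = k - 2}"
      by auto
    then show ?thesis
      using True card_lead_run[OF c] by simp
  qed auto
  finally show ?case
    by (simp add: root_label_count_Suc)
qed

locale catalan_forest =
  fixes Q :: "int \<Rightarrow> int \<Rightarrow> int \<Rightarrow> bool"
  assumes distinct: "\<And>x y z. Q x y z \<Longrightarrow> x \<noteq> y \<and> y \<noteq> z \<and> x \<noteq> z"
    and children: "\<And>n w. w \<in> avoiders Q n \<Longrightarrow>
      bij_betw (\<lambda>s. label Q (insert_max w s)) (active_sites Q w) {2..label Q w + 1}"
    and roots: "\<And>m k. card {u \<in> neg_words m. label Q u = k} = root_label_count m k"
begin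

lemma card_label_closed_form:
  "int (card {w \<in> avoiders Q n. label Q w = k}) = ballot (n + 2) k - defect n k"
proof (induction n arbitrary: k)
  case 0
  have "{w \<in> avoiders Q 0. label Q w = k} = (if k = 1 then {[]} else {})"
    by (auto simp: avoiders_0 label_Nil)
  moreover have "k \<le> 3 \<or> 3 < k"
    by linarith
  ultimately show ?case
    by (auto simp: ballot_def defect_def numeral_eq_Suc le_Suc_eq)
next
  case (Suc n)
  have step: "card {w \<in> avoiders Q (Suc n). label Q w = k} = root_label_count (Suc n) k
      + card {w \<in> avoiders Q n. 2 \<le> k \<and> k \<le> label Q w + 1}"
    using card_label_Suc[OF distinct children] roots by simp
  show ?case
  proof (cases "2 \<le> k")
    case False
    then show ?thesis
      using step by (simp add: root_label_count_def ballot_def defect_def)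
  next
    case True
    have "{w \<in> avoiders Q n. 2 \<le> k \<and> k \<le> label Q w + 1} = {w \<in> avoiders Q n. k - 1 \<le> label Q w}"
      using True by auto
    also have "card \<dots> = (\<Sum>j = k - 1..n + 3. card {w \<in> avoiders Q n. label Q w = j})"
      using label_le by (intro card_eq_sum_fibers finite_avoiders) fastforce
    finally have "int (card {w \<in> avoiders Q n. 2 \<le> k \<and> k \<le> label Q w + 1})
        = (\<Sum>j = k - 1..n + 3. ballot (n + 2) j) - (\<Sum>j = k - 1..n + 3. defect n j)"
      by (simp add: Suc.IH sum_subtractf)
    also have "\<dots> = ballot (n + 3) k - defect_tail n (k - 1)"
      using sum_ballot[of "n + 2" k] sum_defect[of "k - 1" n] True by (simp add: numeral_eq_Suc)
    finally show ?thesis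
      using step root_label_count_defect[OF True, of n] by (simp add: numeral_eq_Suc)
  qed
qed

lemma card_avoiders: "int (card (avoiders Q n)) = int (catalan (n + 2)) - 2 ^ n"
proof -
  have "card (avoiders Q n) = card {w \<in> avoiders Q n. 0 \<le> label Q w}"
    by simp
  also have "\<dots> = (\<Sum>k = 0..n + 3. card {w \<in> avoiders Q n. label Q w = k})"
    using label_le by (intro card_eq_sum_fibers finite_avoiders) fastforce
  finally have "int (card (avoiders Q n))
      = (\<Sum>k = 0..n + 3. ballot (n + 2) k) - (\<Sum>k = 0..n + 3. defect n k)"
    by (simp add: card_label_closed_form sum_subtractf)
  also have "(\<Sum>k = 0..n + 3. ballot (n + 2) k) = ballot (n + 3) 2"
    using sum_ballot[of "n + 2" 2] by (simp add: sum.atLeast_Suc_atMost ballot_def numeral_eq_Suc)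
  also have "(\<Sum>k = 0..n + 3. defect n k) = defect_tail n 1"
    using sum_defect[of 1 n] by (simp add: sum.atLeast_Suc_atMost defect_def)
  finally show ?thesis
    using ballot_2[of "n + 2"] by (simp add: defect_tail_def numeral_eq_Suc)
qed

end

section \<open>The patterns 123, 213 and 132\<close>

lemma active_sites_avoiders_iff:
  assumes "w \<in> avoiders Q n"
  shows "s \<in> active_sites Q w \<longleftrightarrow> s \<le> length w
     \<and> \<not> (\<exists>i j. i < j \<and> j < s \<and> Q (w!i) (w!j) (next_letter w))
     \<and> \<not> (\<exists>i j. i < s \<and> s \<le> j \<and> j < length w \<and> Q (w!i) (next_letter w) (w!j))
     \<and> \<not> (\<exists>i j. s \<le> i \<and> i < j \<and> j < length w \<and> Q (next_letter w) (w!i) (w!j))"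
  using assms avoids3_insert_at_iff[of s w Q "next_letter w"]
  by (auto simp: active_sites_def avoiders_def)

lemma nth_less_next_letter: "w \<in> avoiders Q n \<Longrightarrow> i < length w \<Longrightarrow> w ! i < next_letter w"
  by (simp add: avoiders_def next_letter_gt)

lemma active_sites_max_last:
  assumes Q: "\<And>x y z. Q x y z \<longleftrightarrow> P x y \<and> x < z \<and> y < z" and w: "w \<in> avoiders Q n"
  shows "active_sites Q w = {s. s \<le> length w \<and> sorted_wrt (\<lambda>x y. \<not> P x y) (take s w)}"
proof (intro set_eqI)
  fix s
  let ?M = "next_letter w"
  have less: "w ! i < ?M" if "i < length w" for i
    using nth_less_next_letter[OF w that] .
  have sorted_iff: "sorted_wrt (\<lambda>x y. \<not> P x y) (take s w) \<longleftrightarrow> \<not> (\<exists>i j. i < j \<and> j < s \<and> P (w!i) (w!j))"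
    if "s \<le> length w"
    using that by (auto simp: sorted_wrt_iff_nth_less)
  show "s \<in> active_sites Q w \<longleftrightarrow> s \<in> {s. s \<le> length w \<and> sorted_wrt (\<lambda>x y. \<not> P x y) (take s w)}"
  proof (intro iffI CollectI conjI; (elim CollectE conjE)?)
    assume s: "s \<in> active_sites Q w"
    then show "s \<le> length w"
      by (simp add: active_sites_def)
    moreover have "\<not> P (w!i) (w!j)" if "i < j" "j < s" for i j
    proof
      assume "P (w!i) (w!j)"
      moreover have "w!i < ?M" "w!j < ?M"
        using that \<open>s \<le> length w\<close> less by simp_all
      ultimately show False
        using s that by (auto simp: active_sites_avoiders_iff[OF w] Q)
    qed
    ultimately show "sorted_wrt (\<lambda>x y. \<not> P x y) (take s w)"
      using sorted_iff by blast
  next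
    assume s: "s \<le> length w" "sorted_wrt (\<lambda>x y. \<not> P x y) (take s w)"
    have "\<not> Q (w!i) ?M (w!j)" "\<not> Q ?M (w!i) (w!j)" if "j < length w" for i j
      using that less[of j] by (auto simp: Q)
    moreover have "\<not> Q (w!i) (w!j) ?M" if "i < j" "j < s" for i j
      using s that sorted_iff by (auto simp: Q)
    ultimately show "s \<in> active_sites Q w"
      using s by (auto simp: active_sites_avoiders_iff[OF w])
  qed
qed

lemma active_sites_sorted_prefix_eq_lessThan:
  assumes "active_sites Q w = {s. s \<le> length w \<and> sorted_wrt R (take s w)}"
  shows "active_sites Q w = {..<label Q w}"
  unfolding label_def
proof (rule down_closed_eq_lessThan)
  fix s t assume "s \<in> active_sites Q w" "t \<le> s"
  then show "t \<in> active_sites Q w"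
    using sorted_wrt_take[of R "take s w" t] by (auto simp: assms min_def)
qed simp

lemma label_Cons_sorted_prefix:
  assumes "active_sites Q u = {t. t \<le> length u \<and> sorted_wrt R (take t u)}"
    and "active_sites Q (x # u) = {t. t \<le> length (x # u) \<and> sorted_wrt R (take t (x # u))}"
    and "\<forall>y\<in>set u. R x y"
  shows "label Q (x # u) = Suc (label Q u)"
proof -
  have "\<forall>y\<in>set (take t u). R x y" for t
    using assms(3) set_take_subset[of t u] by blast
  then have "active_sites Q (x # u) = insert 0 (Suc ` active_sites Q u)"
    by (simp add: assms(1,2) Collect_sorted_wrt_take_Cons)
  then show ?thesis
    by (simp add: label_def card_image)
qed

lemma label_Cons_sorted_prefix_run:
  assumes "active_sites Q (x # u) = {t. t \<le> length (x # u) \<and> sorted_wrt R (take t (x # u))}"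
    and "\<forall>y\<in>set u. R x y \<longleftrightarrow> y = x" "R x x"
  shows "label Q (x # u) = Suc (Suc (lead_run x u))"
proof -
  have "t \<le> length u \<and> (\<forall>y\<in>set (take t u). R x y) \<and> sorted_wrt R (take t u)
      \<longleftrightarrow> t \<le> lead_run x u" for t
  proof -
    have "(\<forall>y\<in>set (take t u). R x y) \<longleftrightarrow> set (take t u) \<subseteq> {x}"
      using assms(2) set_take_subset[of t u] by blast
    then show ?thesis
      using set_take_subset_iff_lead_run[of t u x] lead_run_le[of x u]
        sorted_wrt_const[of "take t u" x R] assms(3)
      by fastforce
  qed
  then have "{t. t \<le> length u \<and> (\<forall>y\<in>set (take t u). R x y) \<and> sorted_wrt R (take t u)}
      = {..lead_run x u}"
    by auto
  then have "active_sites Q (x # u) = insert 0 (Suc ` {..lead_run x u})"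
    by (simp add: assms(1) Collect_sorted_wrt_take_Cons)
  then show ?thesis
    by (simp add: label_def card_image)
qed

definition pat123 :: "int \<Rightarrow> int \<Rightarrow> int \<Rightarrow> bool" where
  "pat123 x y z \<longleftrightarrow> x < y \<and> y < z"

lemma active_sites_pat123:
  assumes "w \<in> avoiders pat123 n"
  shows "active_sites pat123 w = {s. s \<le> length w \<and> sorted_wrt (\<ge>) (take s w)}"
proof -
  have "pat123 x y z \<longleftrightarrow> x < y \<and> x < z \<and> y < z" for x y z
    by (auto simp: pat123_def)
  from active_sites_max_last[OF this assms] show ?thesis
    by (simp add: not_less)
qed

lemma distinct_pat123: "pat123 x y z \<Longrightarrow> x \<noteq> y \<and> y \<noteq> z \<and> x \<noteq> z"
  by (auto simp: pat123_def)

lemma active_sites_neg_pat123: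
  "u \<in> neg_words m \<Longrightarrow> active_sites pat123 u = {t. t \<le> length u \<and> sorted_wrt (\<ge>) (take t u)}"
  using neg_words_subset_avoiders[of pat123 m] distinct_pat123 active_sites_pat123 by blast

lemma active_sites_pat123_eq_lessThan:
  "w \<in> avoiders pat123 n \<Longrightarrow> active_sites pat123 w = {..<label pat123 w}"
  by (rule active_sites_sorted_prefix_eq_lessThan[OF active_sites_pat123])

lemma active_sites_insert_max_pat123:
  assumes w: "w \<in> avoiders pat123 n" and s: "s \<in> active_sites pat123 w" "s \<noteq> 0"
  shows "active_sites pat123 (insert_max w s) = {..s}"
proof -
  let ?M = "next_letter w"
  have v: "insert_max w s \<in> avoiders pat123 (Suc n)"
    by (rule insert_max_in_avoiders[OF w s(1)])
  have s_le: "s \<le> length w" and sorted: "sorted_wrt (\<ge>) (take s w)"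
    using s by (auto simp: active_sites_pat123[OF w])
  have w0: "w ! 0 \<in> set (take s w)"
    using s s_le by (auto simp: in_set_conv_nth)
  have "t \<in> active_sites pat123 (insert_max w s) \<longleftrightarrow> t \<le> s" for t
  proof (cases "t \<le> s")
    case True
    then show ?thesis
      using s_le sorted sorted_wrt_take[of "(\<ge>)" "take s w" t]
      by (auto simp: active_sites_pat123[OF v] take_insert_at min_def)
  next
    case False
    have "\<not> sorted_wrt (\<ge>) (take t (insert_max w s))"
    proof
      assume "sorted_wrt (\<ge>) (take t (insert_max w s))"
      then have "?M \<le> w ! 0"
        using False s_le w0 by (simp add: take_insert_at sorted_wrt_append)
      then show False
        using w in_set_takeD[OF w0] by (auto simp: avoiders_def dest: next_letter_gt)
    qed
    then show ?thesis
      using False by (simp add: active_sites_pat123[OF v])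
  qed
  then show ?thesis
    by auto
qed

lemma children_pat123:
  assumes w: "w \<in> avoiders pat123 n"
  shows "bij_betw (\<lambda>s. label pat123 (insert_max w s)) (active_sites pat123 w)
    {2..label pat123 w + 1}"
proof -
  let ?L = "label pat123 w"
  have sites: "active_sites pat123 w = {..<?L}"
    by (rule active_sites_pat123_eq_lessThan[OF w])
  have "0 \<in> active_sites pat123 w"
    by (simp add: active_sites_pat123[OF w])
  then have "0 < ?L"
    using sites by simp
  then have "bij_betw (\<lambda>s. if s = 0 then Suc ?L else Suc s) {..<?L} {2..?L + 1}"
    by (intro bij_betw_if_inj_card_le) (auto simp: inj_on_def)
  moreover have "label pat123 (insert_max w s) = (if s = 0 then Suc ?L else Suc s)"
    if s: "s \<in> active_sites pat123 w" for s
  proof (cases "s = 0")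
    case True
    have "insert_max w 0 \<in> avoiders pat123 (Suc n)"
      using insert_max_in_avoiders[OF w] s True by blast
    moreover have "\<forall>y\<in>set w. y \<le> next_letter w"
      using w by (auto simp: avoiders_def dest: next_letter_gt)
    ultimately show ?thesis
      using True label_Cons_sorted_prefix[OF active_sites_pat123[OF w], of "next_letter w"]
        active_sites_pat123
      by simp
  next
    case False
    then show ?thesis
      using active_sites_insert_max_pat123[OF w s] by (simp add: label_def)
  qed
  ultimately show ?thesis
    unfolding sites[symmetric] by (subst bij_betw_cong) auto
qed

lemma label_Cons_pat123:
  assumes u: "u \<in> neg_words m"
  shows "label pat123 (-1 # u) = Suc (label pat123 u)"
    and "label pat123 (-2 # u) = Suc (Suc (lead_run (-2) u))"
proof -
  have "-1 # u \<in> neg_words (Suc m)" "-2 # u \<in> neg_words (Suc m)"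
    using u by (simp_all add: neg_words_def)
  note sites = active_sites_neg_pat123[OF u]
    active_sites_neg_pat123[OF this(1)] active_sites_neg_pat123[OF this(2)]
  have letters: "y = -2 \<or> y = -1" if "y \<in> set u" for y
    using neg_words_letters[OF u that] .
  show "label pat123 (-1 # u) = Suc (label pat123 u)"
    by (rule label_Cons_sorted_prefix[OF sites(1,2)]) (use letters in fastforce)
  show "label pat123 (-2 # u) = Suc (Suc (lead_run (-2) u))"
    by (rule label_Cons_sorted_prefix_run[OF sites(3)]) (use letters in fastforce)+
qed

lemma catalan_forest_pat123: "catalan_forest pat123"
proof
  show "card {u \<in> neg_words m. label pat123 u = k} = root_label_count m k" for m k
    by (rule card_neg_words_label[where f = "Cons (-1)" and g = "Cons (-2)" and c = "-2"])
      (simp_all add: card_neg_words_Suc_Cons label_Cons_pat123)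
qed (fact distinct_pat123 children_pat123)+

definition pat213 :: "int \<Rightarrow> int \<Rightarrow> int \<Rightarrow> bool" where
  "pat213 x y z \<longleftrightarrow> y < x \<and> x < z"

lemma distinct_pat213: "pat213 x y z \<Longrightarrow> x \<noteq> y \<and> y \<noteq> z \<and> x \<noteq> z"
  by (auto simp: pat213_def)

lemma active_sites_pat213:
  assumes "w \<in> avoiders pat213 n"
  shows "active_sites pat213 w = {s. s \<le> length w \<and> sorted (take s w)}"
proof -
  have "pat213 x y z \<longleftrightarrow> y < x \<and> x < z \<and> y < z" for x y z
    by (auto simp: pat213_def)
  from active_sites_max_last[OF this assms] show ?thesis
    by (simp add: not_less)
qed

lemma active_sites_neg_pat213:
  "u \<in> neg_words m \<Longrightarrow> active_sites pat213 u = {t. t \<le> length u \<and> sorted (take t u)}"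
  using neg_words_subset_avoiders[of pat213 m] distinct_pat213 active_sites_pat213 by blast

lemma active_sites_pat213_eq_lessThan:
  "w \<in> avoiders pat213 n \<Longrightarrow> active_sites pat213 w = {..<label pat213 w}"
  by (rule active_sites_sorted_prefix_eq_lessThan[OF active_sites_pat213])

lemma sorted_take_insert_at_greatest:
  assumes "s \<le> length w" "\<forall>y\<in>set w. y < x" "s < t" "t \<le> Suc (length w)"
  shows "sorted (take t (insert_at w s x)) \<longleftrightarrow> sorted (take s w) \<and> t = Suc s"
proof (cases "t = Suc s")
  case False
  then have "w ! s \<in> set (take (t - Suc s) (drop s w))"
    using assms by (auto simp: in_set_conv_nth intro: exI[of _ 0])
  moreover have "w ! s < x"
    using assms False by simp
  ultimately show ?thesis
    using assms False by (auto simp: take_insert_at sorted_append not_le)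
qed (use assms in \<open>auto simp: take_insert_at sorted_append less_imp_le dest: in_set_takeD\<close>)

lemma active_sites_insert_max_pat213:
  assumes w: "w \<in> avoiders pat213 n" and s: "s \<in> active_sites pat213 w"
  shows "active_sites pat213 (insert_max w s) = {..Suc s}"
proof -
  have v: "insert_max w s \<in> avoiders pat213 (Suc n)"
    by (rule insert_max_in_avoiders[OF w s])
  have s_le: "s \<le> length w" and sorted: "sorted (take s w)"
    using s by (auto simp: active_sites_pat213[OF w])
  have less: "\<forall>y\<in>set w. y < next_letter w"
    using w by (auto simp: avoiders_def next_letter_gt)
  have "t \<in> active_sites pat213 (insert_max w s) \<longleftrightarrow> t \<le> Suc s" for t
  proof -
    consider "t \<le> s" | "s < t" "t \<le> Suc (length w)" | "Suc (length w) < t"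
      by linarith
    then show ?thesis
    proof cases
      case 1
      then show ?thesis
        using s_le sorted sorted_wrt_take[of "(\<le>)" "take s w" t]
        by (auto simp: active_sites_pat213[OF v] take_insert_at min_def)
    next
      case 2
      then show ?thesis
        using sorted_take_insert_at_greatest[OF s_le less] sorted
        by (auto simp: active_sites_pat213[OF v])
    qed (use s_le in \<open>simp add: active_sites_pat213[OF v]\<close>)
  qed
  then show ?thesis
    by auto
qed

lemma children_pat213:
  assumes w: "w \<in> avoiders pat213 n"
  shows "bij_betw (\<lambda>s. label pat213 (insert_max w s)) (active_sites pat213 w)
    {2..label pat213 w + 1}"
proof -
  let ?L = "label pat213 w"
  have sites: "active_sites pat213 w = {..<?L}"
    by (rule active_sites_pat213_eq_lessThan[OF w])
  have "bij_betw (\<lambda>s. Suc (Suc s)) {..<?L} {2..?L + 1}"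
    by (intro bij_betw_if_inj_card_le) (auto simp: inj_on_def)
  moreover have "label pat213 (insert_max w s) = Suc (Suc s)" if "s \<in> active_sites pat213 w" for s
    using active_sites_insert_max_pat213[OF w that] by (simp add: label_def)
  ultimately show ?thesis
    unfolding sites[symmetric] by (subst bij_betw_cong) auto
qed

lemma label_Cons_pat213:
  assumes u: "u \<in> neg_words m"
  shows "label pat213 (-2 # u) = Suc (label pat213 u)"
    and "label pat213 (-1 # u) = Suc (Suc (lead_run (-1) u))"
proof -
  have "-2 # u \<in> neg_words (Suc m)" "-1 # u \<in> neg_words (Suc m)"
    using u by (simp_all add: neg_words_def)
  note sites = active_sites_neg_pat213[OF u]
    active_sites_neg_pat213[OF this(1)] active_sites_neg_pat213[OF this(2)]
  have letters: "y = -2 \<or> y = -1" if "y \<in> set u" for y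
    using neg_words_letters[OF u that] .
  show "label pat213 (-2 # u) = Suc (label pat213 u)"
    by (rule label_Cons_sorted_prefix[OF sites(1,2)]) (use letters in fastforce)
  show "label pat213 (-1 # u) = Suc (Suc (lead_run (-1) u))"
    by (rule label_Cons_sorted_prefix_run[OF sites(3)]) (use letters in fastforce)+
qed

lemma catalan_forest_pat213: "catalan_forest pat213"
proof
  show "card {u \<in> neg_words m. label pat213 u = k} = root_label_count m k" for m k
    by (rule card_neg_words_label[where f = "Cons (-2)" and g = "Cons (-1)" and c = "-1"])
      (simp_all add: card_neg_words_Suc_Cons label_Cons_pat213)
qed (fact distinct_pat213 children_pat213)+

definition pat132 :: "int \<Rightarrow> int \<Rightarrow> int \<Rightarrow> bool" where
  "pat132 x y z \<longleftrightarrow> x < z \<and> z < y"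

lemma distinct_pat132: "pat132 x y z \<Longrightarrow> x \<noteq> y \<and> y \<noteq> z \<and> x \<noteq> z"
  by (auto simp: pat132_def)

lemma active_sites_pat132:
  assumes w: "w \<in> avoiders pat132 n"
  shows "active_sites pat132 w
    = {s. s \<le> length w \<and> (\<forall>x\<in>set (take s w). \<forall>y\<in>set (drop s w). y \<le> x)}"
proof (intro set_eqI)
  fix s
  let ?M = "next_letter w"
  have less: "w ! j < ?M" if "j < length w" for j
    using nth_less_next_letter[OF w that] .
  have "\<not> pat132 (w!i) (w!j) ?M" "\<not> pat132 ?M (w!i) (w!j)"
    and "pat132 (w!i) ?M (w!j) \<longleftrightarrow> w!i < w!j" if "j < length w" for i j
    using less[OF that] by (auto simp: pat132_def)
  note with_max = this
  have max_last: "\<not> (\<exists>i j. i < j \<and> j < s \<and> pat132 (w!i) (w!j) ?M)" if "s \<le> length w"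
    using with_max that by (meson order.strict_trans2)
  have max_first: "\<not> (\<exists>i j. s \<le> i \<and> i < j \<and> j < length w \<and> pat132 ?M (w!i) (w!j))"
    using with_max by blast
  have max_middle: "(\<exists>i j. i < s \<and> s \<le> j \<and> j < length w \<and> pat132 (w!i) ?M (w!j))
      \<longleftrightarrow> (\<exists>i j. i < s \<and> s \<le> j \<and> j < length w \<and> w!i < w!j)"
    using with_max by blast
  have "s \<in> active_sites pat132 w \<longleftrightarrow> s \<le> length w
      \<and> \<not> (\<exists>i j. i < s \<and> s \<le> j \<and> j < length w \<and> w!i < w!j)"
    unfolding active_sites_avoiders_iff[OF w] using max_last max_middle max_first by blast
  also have "\<dots> \<longleftrightarrow> s \<le> length w \<and> (\<forall>x\<in>set (take s w). \<forall>y\<in>set (drop s w). y \<le> x)"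
    using ball_take_drop_iff[of s w "\<lambda>x y. y \<le> x"] by (metis not_less)
  finally show "s \<in> active_sites pat132 w \<longleftrightarrow>
      s \<in> {s. s \<le> length w \<and> (\<forall>x\<in>set (take s w). \<forall>y\<in>set (drop s w). y \<le> x)}"
    by simp
qed

lemma active_sites_insert_max_pat132:
  assumes w: "w \<in> avoiders pat132 n" and s: "s \<in> active_sites pat132 w"
  shows "active_sites pat132 (insert_max w s)
    = insert 0 (Suc ` {t \<in> active_sites pat132 w. s \<le> t})"
proof -
  let ?M = "next_letter w" and ?v = "insert_max w s"
  have v: "?v \<in> avoiders pat132 (Suc n)"
    by (rule insert_max_in_avoiders[OF w s])
  have s_le: "s \<le> length w"
    using s by (simp add: active_sites_def)
  have less: "y < ?M" if "y \<in> set w" for y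
    using w that by (auto simp: avoiders_def next_letter_gt)
  have "Suc t \<in> active_sites pat132 ?v \<longleftrightarrow> t \<in> active_sites pat132 w \<and> s \<le> t" for t
  proof (cases "s \<le> t")
    case True
    have "set (take (Suc t) ?v) = insert ?M (set (take t w))" "drop (Suc t) ?v = drop t w"
      using True s_le by (simp_all add: set_take_insert_at drop_insert_at)
    moreover have "y \<le> ?M" if "y \<in> set (drop t w)" for y
      using less[OF in_set_dropD[OF that]] by simp
    ultimately show ?thesis
      using True by (auto simp: active_sites_pat132[OF v] active_sites_pat132[OF w])
  next
    case False
    have "w ! 0 \<in> set (take (Suc t) ?v)"
      using False s_le by (cases w) (auto simp: take_insert_at)
    moreover have "drop (Suc t) ?v ! (s - Suc t) = ?M" "s - Suc t < length (drop (Suc t) ?v)"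
      using False s_le by (simp_all add: nth_insert_at)
    then have "?M \<in> set (drop (Suc t) ?v)"
      by (metis nth_mem)
    moreover have "w ! 0 < ?M"
      using False s_le less by (cases w) auto
    ultimately show ?thesis
      using False by (auto simp: active_sites_pat132[OF v] not_le)
  qed
  moreover have "0 \<in> active_sites pat132 ?v"
    by (simp add: active_sites_pat132[OF v])
  ultimately show ?thesis
    by (auto simp: image_iff) (metis not0_implies_Suc)
qed

lemma children_pat132:
  assumes w: "w \<in> avoiders pat132 n"
  shows "bij_betw (\<lambda>s. label pat132 (insert_max w s)) (active_sites pat132 w)
    {2..label pat132 w + 1}"
proof -
  let ?V = "active_sites pat132 w"
  have "bij_betw (Suc \<circ> (\<lambda>s. card {t \<in> ?V. s \<le> t})) ?V {2..card ?V + 1}"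
    using bij_betw_card_ge_rank[of ?V] bij_betw_imageI[of Suc "{1..card ?V}" "{2..card ?V + 1}"]
    by (intro bij_betw_trans) auto
  moreover have "label pat132 (insert_max w s) = Suc (card {t \<in> ?V. s \<le> t})" if "s \<in> ?V" for s
    using active_sites_insert_max_pat132[OF w that] by (simp add: label_def card_image)
  ultimately show ?thesis
    by (subst bij_betw_cong) (auto simp: label_def)
qed

lemma active_sites_snoc_neg_pat132:
  assumes u: "u \<in> neg_words m" and x: "x \<in> {-2, -1}"
  shows "active_sites pat132 (u @ [x]) = insert (Suc m) {t. t \<le> m
      \<and> (\<forall>a\<in>set (take t u). \<forall>b\<in>set (drop t u). b \<le> a) \<and> (\<forall>a\<in>set (take t u). x \<le> a)}"
proof -
  have "u @ [x] \<in> avoiders pat132 (Suc m)"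
    using u x neg_words_subset_avoiders[of pat132 "Suc m"] distinct_pat132
    by (force simp: neg_words_def)
  then have "t \<in> active_sites pat132 (u @ [x]) \<longleftrightarrow> t = Suc m \<or> t \<le> m
      \<and> (\<forall>a\<in>set (take t u). \<forall>b\<in>set (drop t u). b \<le> a) \<and> (\<forall>a\<in>set (take t u). x \<le> a)" for t
    using u by (cases "t \<le> m") (auto simp: active_sites_pat132 neg_words_def)
  then show ?thesis
    by auto
qed

lemma active_sites_neg_pat132:
  "u \<in> neg_words m \<Longrightarrow>
    active_sites pat132 u = {t. t \<le> m \<and> (\<forall>a\<in>set (take t u). \<forall>b\<in>set (drop t u). b \<le> a)}"
  using neg_words_subset_avoiders[of pat132 m] distinct_pat132 active_sites_pat132
  by (fastforce simp: neg_words_def)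

lemma label_snoc_pat132:
  assumes u: "u \<in> neg_words m"
  shows "label pat132 (u @ [-2]) = Suc (label pat132 u)"
proof -
  have "-2 \<le> y" if "y \<in> set (take t u)" for y t
    using neg_words_letters[OF u in_set_takeD[OF that]] by auto
  then have "active_sites pat132 (u @ [-2]) = insert (Suc m) (active_sites pat132 u)"
    using active_sites_snoc_neg_pat132[OF u] active_sites_neg_pat132[OF u] by auto
  moreover have "Suc m \<notin> active_sites pat132 u"
    by (simp add: active_sites_neg_pat132[OF u])
  ultimately show ?thesis
    by (simp add: label_def)
qed

lemma label_snoc_run_pat132:
  assumes u: "u \<in> neg_words m"
  shows "label pat132 (u @ [-1]) = Suc (Suc (lead_run (-1) u))"
proof -
  have length_u: "length u = m"
    using u by (simp add: neg_words_def)
  have "t \<le> m \<and> (\<forall>a\<in>set (take t u). \<forall>b\<in>set (drop t u). b \<le> a) \<and> (\<forall>a\<in>set (take t u). -1 \<le> a)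
      \<longleftrightarrow> t \<le> lead_run (-1) u" for t
  proof -
    have run: "(\<forall>a\<in>set (take t u). -1 \<le> a) \<longleftrightarrow> set (take t u) \<subseteq> {-1}"
      using neg_words_letters[OF u] in_set_takeD[of _ t u] by fastforce
    have "b \<le> -1" if "b \<in> set (drop t u)" for b
      using neg_words_letters[OF u in_set_dropD[OF that]] by auto
    then show ?thesis
      using run set_take_subset_iff_lead_run[of t u "-1"] lead_run_le[of "-1" u] length_u
      by fastforce
  qed
  then have "active_sites pat132 (u @ [-1]) = insert (Suc m) {..lead_run (-1) u}"
    using active_sites_snoc_neg_pat132[OF u] by auto
  moreover have "Suc m \<notin> {..lead_run (-1) u}"
    using lead_run_le[of "-1" u] length_u by simp
  ultimately show ?thesis
    by (simp add: label_def)
qed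

lemma catalan_forest_pat132: "catalan_forest pat132"
proof
  show "card {u \<in> neg_words m. label pat132 u = k} = root_label_count m k" for m k
    by (rule card_neg_words_label[where f = "\<lambda>u. u @ [-2]" and g = "\<lambda>u. u @ [-1]" and c = "-1"])
      (simp_all add: card_neg_words_Suc_snoc label_snoc_pat132 label_snoc_run_pat132)
qed (fact distinct_pat132 children_pat132)+


section \<open>Permutation forms of arrangements\<close>

definition neg_positions :: "nat \<Rightarrow> (nat \<Rightarrow> nat) \<Rightarrow> (nat \<Rightarrow> int) \<Rightarrow> nat set" where
  "neg_positions n \<pi> \<phi> = {i \<in> {1..n}. \<pi> i = i \<and> \<phi> i \<noteq> -3}"

lemma arrangements3D:
  assumes "(\<pi>, \<phi>) \<in> arrangements3 n"
  shows "\<pi> permutes {1..n}"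
    and "\<And>i. i \<in> neg_positions n \<pi> \<phi> \<Longrightarrow> \<pi> i = i \<and> \<phi> i \<in> {-2, -1}"
    and "\<And>i. i \<notin> neg_positions n \<pi> \<phi> \<Longrightarrow> \<phi> i = (if i \<in> {1..n} \<and> \<pi> i = i then -3 else 0)"
proof -
  have \<phi>: "\<phi> i \<in> (if i \<in> {1..n} \<and> \<pi> i = i then {-1, -2, -3} else {0})" for i
    using assms by (simp add: arrangements3_def)
  show "\<pi> permutes {1..n}"
    using assms by (simp add: arrangements3_def)
  show "\<pi> i = i \<and> \<phi> i \<in> {-2, -1}" if "i \<in> neg_positions n \<pi> \<phi>" for i
    using that \<phi>[of i] by (auto simp: neg_positions_def)
  show "\<phi> i = (if i \<in> {1..n} \<and> \<pi> i = i then -3 else 0)" if "i \<notin> neg_positions n \<pi> \<phi>" for i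
    using that \<phi>[of i] by (auto simp: neg_positions_def split: if_splits)
qed

lemma image_nonneg_positions:
  assumes a: "(\<pi>, \<phi>) \<in> arrangements3 n"
  shows "\<pi> ` ({1..n} - neg_positions n \<pi> \<phi>) = {1..n} - neg_positions n \<pi> \<phi>"
proof (rule endo_inj_surj)
  have "\<pi> i \<notin> neg_positions n \<pi> \<phi>" if "i \<notin> neg_positions n \<pi> \<phi>" for i
    using that arrangements3D(2)[OF a, of "\<pi> i"] permutes_inj[OF arrangements3D(1)[OF a]]
    by (metis injD)
  then show "\<pi> ` ({1..n} - neg_positions n \<pi> \<phi>) \<subseteq> {1..n} - neg_positions n \<pi> \<phi>"
    using permutes_in_image[OF arrangements3D(1)[OF a]] by auto
qed (use permutes_inj_on[OF arrangements3D(1)[OF a]] in auto)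

lemma positive_pf3_raw:
  assumes a: "(\<pi>, \<phi>) \<in> arrangements3 n"
  shows "{u \<in> pf3_raw \<pi> \<phi> ` {1..n}. 0 < u} = int ` ({1..n} - neg_positions n \<pi> \<phi>)"
proof -
  let ?S = "neg_positions n \<pi> \<phi>" and ?T = "{1..n} - neg_positions n \<pi> \<phi>"
  have "pf3_raw \<pi> \<phi> ` {1..n} = pf3_raw \<pi> \<phi> ` ?S \<union> pf3_raw \<pi> \<phi> ` ?T"
    by (auto simp: neg_positions_def)
  also have "\<dots> = \<phi> ` ?S \<union> int ` \<pi> ` ?T"
    by (auto simp: pf3_raw_def neg_positions_def image_iff)
  also have "\<pi> ` ?T = ?T"
    by (rule image_nonneg_positions[OF a])
  finally have raw: "pf3_raw \<pi> \<phi> ` {1..n} = \<phi> ` ?S \<union> int ` ?T" .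
  have "\<phi> i < 0" if "i \<in> ?S" for i
    using arrangements3D(2)[OF a that] by auto
  then show ?thesis
    unfolding raw by force
qed

lemma pf3_eq_map:
  assumes a: "(\<pi>, \<phi>) \<in> arrangements3 n"
  defines "T \<equiv> {1..n} - neg_positions n \<pi> \<phi>"
  shows "pf3 n \<pi> \<phi> = map (\<lambda>i. if i \<in> neg_positions n \<pi> \<phi> then \<phi> i
      else int (card {t \<in> T. t \<le> \<pi> i})) [1..<n+1]"
  unfolding pf3_def
proof (rule map_cong[OF refl])
  fix i assume "i \<in> set [1..<n+1]"
  then consider "i \<in> neg_positions n \<pi> \<phi>" | "i \<in> T"
    by (cases "i \<in> neg_positions n \<pi> \<phi>") (auto simp: T_def)
  then show "(let v = pf3_raw \<pi> \<phi> i in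
      if 0 < v then int (card {u \<in> pf3_raw \<pi> \<phi> ` {1..n}. 0 < u \<and> u \<le> v}) else v)
    = (if i \<in> neg_positions n \<pi> \<phi> then \<phi> i else int (card {t \<in> T. t \<le> \<pi> i}))"
  proof cases
    case 1
    then show ?thesis
      using arrangements3D(2)[OF a 1] by (auto simp: pf3_raw_def neg_positions_def)
  next
    case 2
    have "{u \<in> pf3_raw \<pi> \<phi> ` {1..n}. 0 < u \<and> u \<le> int (\<pi> i)}
        = {u \<in> {u \<in> pf3_raw \<pi> \<phi> ` {1..n}. 0 < u}. u \<le> int (\<pi> i)}"
      by blast
    also have "\<dots> = int ` {t \<in> T. t \<le> \<pi> i}"
      unfolding positive_pf3_raw[OF a] T_def[symmetric] by auto
    finally have "card {u \<in> pf3_raw \<pi> \<phi> ` {1..n}. 0 < u \<and> u \<le> int (\<pi> i)} = card {t \<in> T. t \<le> \<pi> i}"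
      by (simp add: card_image)
    moreover have "0 < \<pi> i"
      using 2 image_nonneg_positions[OF a] by (force simp: T_def)
    ultimately show ?thesis
      using 2 by (auto simp: pf3_raw_def T_def neg_positions_def)
  qed
qed

lemma bij_betw_rank_perm:
  assumes a: "(\<pi>, \<phi>) \<in> arrangements3 n"
  defines "T \<equiv> {1..n} - neg_positions n \<pi> \<phi>"
  shows "bij_betw (\<lambda>i. card {t \<in> T. t \<le> \<pi> i}) T {1..card T}"
proof -
  have "bij_betw \<pi> T T"
    using image_nonneg_positions[OF a] permutes_inj_on[OF arrangements3D(1)[OF a]]
    by (simp add: bij_betw_def T_def)
  from bij_betw_trans[OF this bij_betw_card_le_rank[of T]] show ?thesis
    by (simp add: T_def comp_def)
qed

lemma arrangement_word_pf3:
  assumes a: "(\<pi>, \<phi>) \<in> arrangements3 n"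
  shows "arrangement_word (pf3 n \<pi> \<phi>)"
proof -
  define S where "S = neg_positions n \<pi> \<phi>"
  define T where "T = {1..n} - S"
  define g where "g i = (if i \<in> S then \<phi> i else int (card {t \<in> T. t \<le> \<pi> i}))" for i
  have pf3: "pf3 n \<pi> \<phi> = map g [1..<n+1]"
    using pf3_eq_map[OF a] by (simp add: g_def S_def T_def)
  have bij: "bij_betw (\<lambda>i. card {t \<in> T. t \<le> \<pi> i}) T {1..card T}"
    using bij_betw_rank_perm[OF a] by (simp add: S_def T_def)
  have S: "g i \<in> {-2, -1}" if "i \<in> S" for i
    using arrangements3D(2)[OF a] that by (simp add: g_def S_def)
  have T: "g i \<in> {1..int (card T)}" if "i \<in> T" for i
    using bij_betwE[OF bij] that by (force simp: g_def T_def)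
  have "set (pf3 n \<pi> \<phi>) \<subseteq> {-2, -1} \<union> {0<..}"
    using S T by (fastforce simp: pf3 S_def T_def)
  moreover have "pos_mset (pf3 n \<pi> \<phi>) = mset_set (g ` T)"
  proof -
    have "{i \<in> {1..n}. 0 < g i} = T"
      using S T by (force simp: T_def)
    moreover have "inj_on g T"
      using bij by (auto simp: bij_betw_def inj_on_def g_def T_def)
    moreover have "mset [1..<n+1] = mset_set {1..n}"
      by (simp del: upt_Suc add: atLeastLessThanSuc_atLeastAtMost)
    ultimately show ?thesis
      by (simp del: upt_Suc add: pf3 pos_mset_def filter_mset_image_mset image_mset_mset_set)
  qed
  moreover have "g ` T = {1..int (card T)}"
  proof -
    have "g ` T = int ` (\<lambda>i. card {t \<in> T. t \<le> \<pi> i}) ` T"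
      unfolding image_image by (rule image_cong) (auto simp: g_def T_def)
    also have "\<dots> = {1..int (card T)}"
      using bij_betw_imp_surj_on[OF bij] by (simp add: image_int_atLeastAtMost)
    finally show ?thesis .
  qed
  ultimately show ?thesis
    by (simp add: arrangement_word_def next_letter_def)
qed

lemma length_pf3 [simp]: "length (pf3 n \<pi> \<phi>) = n"
  by (simp add: pf3_def)

lemma nth_pf3:
  assumes a: "(\<pi>, \<phi>) \<in> arrangements3 n" and i: "i \<in> {1..n}"
  shows "pf3 n \<pi> \<phi> ! (i - 1) = (if i \<in> neg_positions n \<pi> \<phi> then \<phi> i
    else int (card {t \<in> {1..n} - neg_positions n \<pi> \<phi>. t \<le> \<pi> i}))"
proof -
  have "i - 1 < length [1..<n+1]" "[1..<n+1] ! (i - 1) = i"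
    using i by (auto simp del: upt_Suc)
  then show ?thesis
    by (simp del: upt_Suc add: pf3_eq_map[OF a])
qed

lemma nth_pf3_neg_iff:
  assumes a: "(\<pi>, \<phi>) \<in> arrangements3 n" and i: "i \<in> {1..n}"
  shows "pf3 n \<pi> \<phi> ! (i - 1) < 0 \<longleftrightarrow> i \<in> neg_positions n \<pi> \<phi>"
  unfolding nth_pf3[OF a i]
  using arrangements3D(2)[OF a, of i] bij_betw_apply[OF bij_betw_rank_perm[OF a], of i] i
  by auto

lemma pf3_eq_neg_positions:
  assumes a: "(\<pi>, \<phi>) \<in> arrangements3 n" and a': "(\<pi>', \<phi>') \<in> arrangements3 n"
    and eq: "pf3 n \<pi> \<phi> = pf3 n \<pi>' \<phi>'"
  shows "neg_positions n \<pi>' \<phi>' = neg_positions n \<pi> \<phi>"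
proof -
  have "i \<in> neg_positions n \<pi>' \<phi>' \<longleftrightarrow> i \<in> neg_positions n \<pi> \<phi>" for i
  proof (cases "i \<in> {1..n}")
    case True
    then show ?thesis
      using nth_pf3_neg_iff[OF a True] nth_pf3_neg_iff[OF a' True] eq by simp
  qed (auto simp: neg_positions_def)
  then show ?thesis
    by auto
qed

lemma pf3_eq_perm:
  assumes a: "(\<pi>, \<phi>) \<in> arrangements3 n" and a': "(\<pi>', \<phi>') \<in> arrangements3 n"
    and eq: "pf3 n \<pi> \<phi> = pf3 n \<pi>' \<phi>'"
  shows "\<pi> = \<pi>'"
proof
  fix i
  define S where "S = neg_positions n \<pi> \<phi>"
  define T where "T = {1..n} - S"
  have S': "neg_positions n \<pi>' \<phi>' = S"
    unfolding S_def by (rule pf3_eq_neg_positions[OF a a' eq])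
  consider "i \<in> T" | "i \<in> S" | "i \<notin> {1..n}"
    by (auto simp: T_def)
  then show "\<pi> i = \<pi>' i"
  proof cases
    case 1
    then have "i \<in> {1..n}" "i \<notin> S"
      by (auto simp: T_def)
    then have "card {t \<in> T. t \<le> \<pi> i} = card {t \<in> T. t \<le> \<pi>' i}"
      using nth_pf3[OF a \<open>i \<in> {1..n}\<close>] nth_pf3[OF a' \<open>i \<in> {1..n}\<close>] eq S'
      by (simp add: S_def T_def)
    moreover have "\<pi> i \<in> T" "\<pi>' i \<in> T"
      using 1 image_nonneg_positions[OF a] image_nonneg_positions[OF a'] S'
      by (auto simp: S_def T_def)
    ultimately show ?thesis
      using bij_betw_imp_inj_on[OF bij_betw_card_le_rank[of T]] by (simp add: T_def inj_on_def)
  next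
    case 2
    then show ?thesis
      using arrangements3D(2)[OF a] arrangements3D(2)[OF a'] S' by (simp add: S_def)
  next
    case 3
    then show ?thesis
      using permutes_not_in[OF arrangements3D(1)[OF a]] permutes_not_in[OF arrangements3D(1)[OF a']]
      by simp
  qed
qed

lemma inj_on_pf3: "inj_on (\<lambda>a. pf3 n (fst a) (snd a)) (arrangements3 n)"
proof (rule inj_onI)
  fix b b' assume "b \<in> arrangements3 n" "b' \<in> arrangements3 n"
    "pf3 n (fst b) (snd b) = pf3 n (fst b') (snd b')"
  moreover obtain \<pi> \<phi> \<pi>' \<phi>' where b: "b = (\<pi>, \<phi>)" "b' = (\<pi>', \<phi>')"
    by fastforce
  ultimately have a: "(\<pi>, \<phi>) \<in> arrangements3 n" and a': "(\<pi>', \<phi>') \<in> arrangements3 n"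
    and eq: "pf3 n \<pi> \<phi> = pf3 n \<pi>' \<phi>'"
    by simp_all
  note S' = pf3_eq_neg_positions[OF a a' eq] and \<pi> = pf3_eq_perm[OF a a' eq]
  have "\<phi> i = \<phi>' i" for i
  proof (cases "i \<in> neg_positions n \<pi> \<phi>")
    case True
    then have "i \<in> {1..n}"
      by (simp add: neg_positions_def)
    then show ?thesis
      using True nth_pf3[OF a \<open>i \<in> {1..n}\<close>] nth_pf3[OF a' \<open>i \<in> {1..n}\<close>] eq S' by simp
  next
    case False
    then show ?thesis
      using arrangements3D(3)[OF a, of i] arrangements3D(3)[OF a', of i] S' \<pi> by simp
  qed
  with \<pi> show "b = b'"
    by (simp add: b fun_eq_iff)
qed

lemma bij_betw_positive_letters:
  assumes w: "arrangement_word w" "length w = n"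
  defines "T \<equiv> {i \<in> {1..n}. 0 < w ! (i - 1)}"
  shows "bij_betw (\<lambda>i. nat (w ! (i - 1))) T {1..card T}"
proof -
  define k where "k = nat (next_letter w - 1)"
  have "inj_on (\<lambda>i. nat (w ! (i - 1))) T"
  proof (rule inj_onI)
    fix i j assume "i \<in> T" "j \<in> T" "nat (w ! (i - 1)) = nat (w ! (j - 1))"
    then have "i - 1 = j - 1"
      using w by (intro arrangement_word_nth_inj[OF w(1)]) (auto simp: T_def)
    then show "i = j"
      using \<open>i \<in> T\<close> \<open>j \<in> T\<close> by (auto simp: T_def)
  qed
  moreover have "(\<lambda>i. nat (w ! (i - 1))) ` T = {1..k}"
  proof -
    have pos: "{x \<in> set w. 0 < x} = {1..int k}"
      using w(1) set_pos_mset[of w] next_letter_pos[of w] by (simp add: arrangement_word_def k_def)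
    have "x \<in> (\<lambda>i. nat (w ! (i - 1))) ` T \<longleftrightarrow> int x \<in> {x \<in> set w. 0 < x}" for x
    proof
      assume "x \<in> (\<lambda>i. nat (w ! (i - 1))) ` T"
      then show "int x \<in> {x \<in> set w. 0 < x}"
        using w(2) by (auto simp: T_def)
    next
      assume "int x \<in> {x \<in> set w. 0 < x}"
      then obtain p where "p < n" "w ! p = int x" "0 < x"
        using w(2) by (auto simp: in_set_conv_nth)
      then show "x \<in> (\<lambda>i. nat (w ! (i - 1))) ` T"
        by (auto simp: T_def image_iff intro!: exI[of _ "Suc p"])
    qed
    then show ?thesis
      using pos by (intro set_eqI) simp
  qed
  ultimately show ?thesis
    by (metis bij_betw_def bij_betw_same_card card_atLeastAtMost diff_Suc_1 inj_on_imp_bij_betw)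
qed

lemma permutation_with_ranks:
  fixes T :: "'a :: linorder set"
  assumes "finite T" "bij_betw r T {1..card T}"
  obtains \<pi> where "\<pi> permutes T" "\<And>i. i \<in> T \<Longrightarrow> card {t \<in> T. t \<le> \<pi> i} = r i"
proof -
  define rank where "rank v = card {t \<in> T. t \<le> v}" for v
  have rank: "bij_betw rank T {1..card T}"
    unfolding rank_def by (rule bij_betw_card_le_rank[OF assms(1)])
  define \<pi> where "\<pi> i = (if i \<in> T then inv_into T rank (r i) else i)" for i
  have "bij_betw (inv_into T rank \<circ> r) T T"
    using assms(2) bij_betw_inv_into[OF rank] by (rule bij_betw_trans)
  then have "bij_betw \<pi> T T"
    by (rule bij_betw_cong[THEN iffD1, rotated]) (simp add: \<pi>_def)
  then have "\<pi> permutes T"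
    by (rule bij_imp_permutes) (simp add: \<pi>_def)
  moreover have "rank (\<pi> i) = r i" if "i \<in> T" for i
    using that bij_betw_apply[OF assms(2)] bij_betw_imp_surj_on[OF rank]
    by (simp add: \<pi>_def f_inv_into_f)
  ultimately show ?thesis
    using that by (simp add: rank_def)
qed

lemma pf3_surj:
  assumes w: "arrangement_word w" "length w = n"
  obtains a where "a \<in> arrangements3 n" "pf3 n (fst a) (snd a) = w"
proof -
  define S where "S = {i \<in> {1..n}. w ! (i - 1) < 0}"
  define T where "T = {i \<in> {1..n}. 0 < w ! (i - 1)}"
  have letters: "w ! (i - 1) \<in> {-2, -1} \<or> 0 < w ! (i - 1)" if "i \<in> {1..n}" for i
    using w that nth_mem[of "i - 1" w] by (force simp: arrangement_word_def)
  then have T: "T = {1..n} - S"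
    by (force simp: S_def T_def)
  obtain \<pi> where \<pi>: "\<pi> permutes T" and rank: "\<And>i. i \<in> T \<Longrightarrow> card {t \<in> T. t \<le> \<pi> i} = nat (w ! (i - 1))"
    using permutation_with_ranks[OF _ bij_betw_positive_letters[OF w]] by (auto simp: T_def)
  define \<phi> where "\<phi> i = (if i \<in> S then w ! (i - 1) else if i \<in> T \<and> \<pi> i = i then -3 else 0)" for i
  have "\<pi> permutes {1..n}"
    using \<pi> by (rule permutes_subset) (simp add: T)
  moreover have "\<phi> i \<in> (if i \<in> {1..n} \<and> \<pi> i = i then {-1, -2, -3} else {0})" for i
    using letters[of i] permutes_not_in[OF \<pi>, of i] by (auto simp: \<phi>_def S_def T)
  ultimately have a: "(\<pi>, \<phi>) \<in> arrangements3 n"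
    by (simp add: arrangements3_def)
  have "i \<in> neg_positions n \<pi> \<phi> \<longleftrightarrow> i \<in> S" for i
    using letters[of i] permutes_not_in[OF \<pi>, of i] by (auto simp: neg_positions_def \<phi>_def S_def T)
  then have S: "neg_positions n \<pi> \<phi> = S"
    by blast
  have nth: "pf3 n \<pi> \<phi> ! (i - 1) = w ! (i - 1)" if "i \<in> {1..n}" for i
  proof (cases "i \<in> S")
    case False
    then have "i \<in> T"
      using that T by blast
    have "card {t \<in> {1..n} - S. t \<le> \<pi> i} = nat (w ! (i - 1))"
      using rank[OF \<open>i \<in> T\<close>] by (simp only: T)
    moreover have "0 < w ! (i - 1)"
      using \<open>i \<in> T\<close> by (simp add: T_def)
    ultimately show ?thesis
      using nth_pf3[OF a that] False S by simp
  qed (use nth_pf3[OF a that] S in \<open>simp add: \<phi>_def\<close>)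
  have "pf3 n \<pi> \<phi> = w"
  proof (rule nth_equalityI)
    show "length (pf3 n \<pi> \<phi>) = length w"
      using w(2) by simp
    fix i assume "i < length (pf3 n \<pi> \<phi>)"
    then show "pf3 n \<pi> \<phi> ! i = w ! i"
      using nth[of "Suc i"] by simp
  qed
  with a show ?thesis
    using that by force
qed


lemma bij_betw_pf3:
  "bij_betw (\<lambda>a. pf3 n (fst a) (snd a)) (arrangements3 n) {w. length w = n \<and> arrangement_word w}"
proof (rule bij_betw_imageI[OF inj_on_pf3])
  show "(\<lambda>a. pf3 n (fst a) (snd a)) ` arrangements3 n = {w. length w = n \<and> arrangement_word w}"
  proof
    show "(\<lambda>a. pf3 n (fst a) (snd a)) ` arrangements3 n \<subseteq> {w. length w = n \<and> arrangement_word w}"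
      using arrangement_word_pf3 by fastforce
    show "{w. length w = n \<and> arrangement_word w} \<subseteq> (\<lambda>a. pf3 n (fst a) (snd a)) ` arrangements3 n"
    proof
      fix w assume "w \<in> {w. length w = n \<and> arrangement_word w}"
      then obtain a where "a \<in> arrangements3 n" "w = pf3 n (fst a) (snd a)"
        by (auto elim: pf3_surj)
      then show "w \<in> (\<lambda>a. pf3 n (fst a) (snd a)) ` arrangements3 n"
        by (rule rev_image_eqI)
    qed
  qed
qed

section \<open>Reversal and the six patterns\<close>

lemma avoids_iff_avoids3:
  "avoids w \<sigma> \<longleftrightarrow> avoids3 (\<lambda>x y z. red [x, y, z] = [int (\<sigma> 1), int (\<sigma> 2), int (\<sigma> 3)]) w"
  by (simp add: avoids_def avoids3_def)

lemma red3_iff: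
  "red [x, y, z] = [1, 2, 3] \<longleftrightarrow> pat123 x y z"
  "red [x, y, z] = [3, 2, 1] \<longleftrightarrow> pat123 z y x"
  "red [x, y, z] = [2, 1, 3] \<longleftrightarrow> pat213 x y z"
  "red [x, y, z] = [3, 1, 2] \<longleftrightarrow> pat213 z y x"
  "red [x, y, z] = [1, 3, 2] \<longleftrightarrow> pat132 x y z"
  "red [x, y, z] = [2, 3, 1] \<longleftrightarrow> pat132 z y x"
  unfolding pat123_def pat213_def pat132_def red_def
  by (cases x y rule: linorder_cases; cases y z rule: linorder_cases;
      cases x z rule: linorder_cases;
      auto simp: card_insert_if conj_disj_distribR Collect_disj_eq Collect_conv_if)+

lemma card_avoiders_rev: "card (avoiders (\<lambda>x y z. Q z y x) n) = card (avoiders Q n)"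
proof -
  have "rev ` avoiders Q n = avoiders (\<lambda>x y z. Q z y x) n"
    by (force simp: avoiders_def avoids3_rev arrangement_word_rev image_iff
        intro: exI[of _ "rev _"])
  then show ?thesis
    by (metis card_image inj_on_inverseI rev_rev_ident)
qed

lemma perm3_cases:
  assumes "\<sigma> permutes {1, 2, 3 :: nat}"
  shows "(\<sigma> 1, \<sigma> 2, \<sigma> 3) \<in> {(1, 2, 3), (3, 2, 1), (2, 1, 3), (3, 1, 2), (1, 3, 2), (2, 3, 1)}"
proof -
  have "\<sigma> 1 \<noteq> \<sigma> 2" "\<sigma> 1 \<noteq> \<sigma> 3" "\<sigma> 2 \<noteq> \<sigma> 3"
    using permutes_inj[OF assms] by (simp_all add: inj_eq)
  moreover have "\<sigma> 1 = 1 \<or> \<sigma> 1 = 2 \<or> \<sigma> 1 = 3" "\<sigma> 2 = 1 \<or> \<sigma> 2 = 2 \<or> \<sigma> 2 = 3"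
    "\<sigma> 3 = 1 \<or> \<sigma> 3 = 2 \<or> \<sigma> 3 = 3"
    using permutes_in_image[OF assms] by auto
  ultimately show ?thesis
    by (elim disjE) simp_all
qed

lemma card_avoiders_red:
  assumes "\<sigma> permutes {1, 2, 3}"
  shows "int (card (avoiders (\<lambda>x y z. red [x, y, z] = [int (\<sigma> 1), int (\<sigma> 2), int (\<sigma> 3)]) n))
    = int (catalan (n + 2)) - 2 ^ n"
proof -
  have "(\<lambda>x y z. red [x, y, z] = [int (\<sigma> 1), int (\<sigma> 2), int (\<sigma> 3)])
      \<in> {pat123, \<lambda>x y z. pat123 z y x, pat213, \<lambda>x y z. pat213 z y x, pat132, \<lambda>x y z. pat132 z y x}"
    using perm3_cases[OF assms] by (auto simp: red3_iff)
  then show ?thesis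
    using catalan_forest.card_avoiders[OF catalan_forest_pat123]
      catalan_forest.card_avoiders[OF catalan_forest_pat213]
      catalan_forest.card_avoiders[OF catalan_forest_pat132]
      card_avoiders_rev[of pat123] card_avoiders_rev[of pat213] card_avoiders_rev[of pat132]
    by auto
qed

theorem theorem4p1:
  fixes n :: nat and \<sigma> :: "nat \<Rightarrow> nat"
  assumes "n \<ge> 1" and "\<sigma> permutes {1,2,3}"
  shows "int (card {a \<in> arrangements3 n. avoids (pf3 n (fst a) (snd a)) \<sigma>})
           = int (catalan (n + 2)) - 2 ^ n"
proof -
  let ?Q = "\<lambda>x y z. red [x, y, z] = [int (\<sigma> 1), int (\<sigma> 2), int (\<sigma> 3)]"
  have "card {a \<in> arrangements3 n. avoids (pf3 n (fst a) (snd a)) \<sigma>}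
      = card {w \<in> {w. length w = n \<and> arrangement_word w}. avoids w \<sigma>}"
    by (rule bij_betw_same_card[OF bij_betw_Collect[OF bij_betw_pf3]]) simp
  also have "\<dots> = card (avoiders ?Q n)"
    by (simp add: avoiders_def avoids_iff_avoids3 conj_assoc)
  finally show ?thesis
    using card_avoiders_red[OF assms(2)] by simp
qed


end
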